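(* Consider the online execution scheduling algorithm OES (described in the context) applied to a distributed GNN training job with a fixed task placement, and let $T_{OES}$ be the resulting training makespan (completion time of all tasks of iteration $N$). Let $T^*$ be the optimal makespan of the offline execution and flow scheduling problem (described in the context) for the same placement and the same data volumes. Then $T_{OES}\le \Delta\, T^*$, where $\Delta=\max_{m\in\{1,\dots,M\}}\max\{\widehat{\Delta^m_{in}},\widehat{\Delta^m_{out}}\}$; i.e., OES is $\Delta$-competitive.
   Context: Setting (distributed GNN training job). There are $M$ machines; machine $m$ has available incoming bandwidth $B^m_{in}$ and outgoing bandwidth $B^m_{out}$. The set of tasks is $J=J_g\cup J_s\cup J_w\cup J_{ps}$ (graph store servers, samplers, workers, parameter servers (PSs)); each worker has an associated set of samplers. A fixed placement assigns each task $j$ to exactly one machine ($y^m_j=1$ iff $j$ is on machine $m$). Training runs for $N$ iterations in discrete time steps $t=1,\dots,T$; task $j$ takes execution time $p_j$ in every iteration; $(j,n)$ denotes task $j$ in iteration $n$. Successor relation $succ(j,n)$: $(s,n)\in succ(g,n)$ for every graph store server $g$ and sampler $s$; $(w,n)\in succ(s,n)$ for every sampler $s$ and its associated worker $w$; $(ps,n)\in succ(w,n)$ for every worker $w$ and PS $ps$; $(w,n+1)\in succ(ps,n)$ for every PS $ps$ and worker $w$. For each $(j',n')\in succ(j,n)$ with $j,j'$ on different machines there is a flow $(j,n)\to(j',n')$ of data volume $d_{(j,n)\to(j',n')}$. Offline scheduling problem. Choose start times $x^t_{j,n}\in\{0,1\}$ (each $(j,n)$ starts exactly once; graph store servers start iteration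 1 at $t=1$) and transmission amounts $k^t_{(j,n)\to(j',n')}\ge 0$ such that: each flow transmits total amount $d_{(j,n)\to(j',n')}$; a flow transmits only at times $t\ge$ (start of $(j,n)$) $+p_j$ and strictly before the start of $(j',n')$; if $j,j'$ are on the same machine, $(j',n')$ starts no earlier than the finish of $(j,n)$; $(j,n+1)$ starts no earlier than the finish of $(j,n)$; the last transmission time of $(j,n)\to(j',n')$ is strictly before the first transmission time of $(j,n+1)\to(j',n'+1)$; and at each time $t$ the total amount sent out of (into) machine $m$ over inter-machine flows is at most $B^m_{out}$ ($B^m_{in}$). The objective is to minimize the makespan $\max_{j}\{(\text{start time of }(j,N))+p_j\}$. $T^*$ is its optimal value when all data volumes are known in advance. (Online, the data volumes are not known beforehand.) Algorithm OES. It maintains a set $F_{act}$ of active flows and a set $F_{pend}$ of pending flows. At $t=1$ all graph store servers of iteration 1 start. At each time step $t$: every task $(j,n)$ whose dependencies are all satisfied starts; for every task $(j,n)$ that finished at $t-1$ and every inter-machine flow $(j,n)\to(j',n')$ out of it, the flow is added to $F_{pend}$ if $(j,n-1)\to(j',n'-1)\in F_{act}\cup F_{pend}$, and to $F_{act}$ otherwise; for every flow $(j,n)\to(j',n')$ that finished at $t-1$, if $(j,n+1)\to(j',n'+1)\in F_{pend}$ it is moved to $F_{act}$. Then, with $\Delta^m_{in}$ (resp. $\Delta^m_{out}$) the number of flows in $F_{act}$ whose destination (resp. source) task is on machine $m$, every active flow from a task on machine $m$ to a task on machine $m'$ transmits $\min\{B^{m'}_{in}/\Delta^{m'}_{in},\,B^m_{out}/\Delta^m_{out}\}$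 data units at time $t$. It stops when all tasks of iteration $N$ are done. One-iteration degrees. Let $F_{one\_iter}$ be the set of all inter-machine flows of one training iteration (including the transfers of parameters updated by the PSs in that iteration to the workers). $\widehat{\Delta^m_{in}}$ (resp. $\widehat{\Delta^m_{out}}$) is the number of flows in $F_{one\_iter}$ whose destination (resp. source) task is placed on machine $m$. *)

theory Defs
  imports Complex_Main
begin

text \<open>A task instance is a pair (j, n): task j in iteration n (iterations 1..N). Time steps are
  natural numbers 1, 2, ...; a task started at time s with execution time p
  occupies steps s .. s+p-1 and its outgoing flows may transmit from time s+p on.\<close>

type_synonym 't inst = "'t \<times> nat"
type_synonym 't flow = "'t inst \<times> 't inst"

record 't gnn_job =
  Jg    :: "'t set"             \<comment> \<open>graph store servers\<close>
  Js    :: "'t set"             \<comment> \<open>samplers\<close>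
  Jw    :: "'t set"             \<comment> \<open>workers\<close>
  Jps   :: "'t set"             \<comment> \<open>parameter servers\<close>
  assoc :: "'t \<Rightarrow> 't \<Rightarrow> bool"   \<comment> \<open>assoc s w: sampler s is associated with worker w\<close>
  place :: "'t \<Rightarrow> nat"          \<comment> \<open>machine of each task (machines 1..M)\<close>
  ptime :: "'t \<Rightarrow> nat"
  nmach :: nat
  niter :: nat
  Bin   :: "nat \<Rightarrow> real"
  Bout  :: "nat \<Rightarrow> real"
  vol   :: "'t flow \<Rightarrow> real"

definition tasks :: "'t gnn_job \<Rightarrow> 't set" where
  "tasks G = Jg G \<union> Js G \<union> Jw G \<union> Jps G"

definition iter_edge :: "'t gnn_job \<Rightarrow> 't \<Rightarrow> 't \<Rightarrow> bool" where
  "iter_edge G j j' \<longleftrightarrow>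
     (j \<in> Jg G \<and> j' \<in> Js G)
   \<or> (j \<in> Js G \<and> j' \<in> Jw G \<and> assoc G j j')
   \<or> (j \<in> Jw G \<and> j' \<in> Jps G)"

definition next_edge :: "'t gnn_job \<Rightarrow> 't \<Rightarrow> 't \<Rightarrow> bool" where
  "next_edge G j j' \<longleftrightarrow> j \<in> Jps G \<and> j' \<in> Jw G"

text \<open>The successor relation: succ G (j,n) (j',n') means (j',n') \<in> succ(j,n),
  restricted to iterations 1..N.\<close>

definition succ :: "'t gnn_job \<Rightarrow> 't inst \<Rightarrow> 't inst \<Rightarrow> bool" where
  "succ G q q' \<longleftrightarrow>
     1 \<le> snd q \<and> snd q \<le> niter G \<and> 1 \<le> snd q' \<and> snd q' \<le> niter G \<and>
     ((iter_edge G (fst q) (fst q') \<and> snd q' = snd q)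
      \<or> (next_edge G (fst q) (fst q') \<and> snd q' = Suc (snd q)))"

definition flows :: "'t gnn_job \<Rightarrow> 't flow set" where
  "flows G = {f. succ G (fst f) (snd f) \<and> place G (fst (fst f)) \<noteq> place G (fst (snd f))}"

definition src_mach :: "'t gnn_job \<Rightarrow> 't flow \<Rightarrow> nat" where
  "src_mach G f = place G (fst (fst f))"

definition dst_mach :: "'t gnn_job \<Rightarrow> 't flow \<Rightarrow> nat" where
  "dst_mach G f = place G (fst (snd f))"

definition next_flow :: "'t flow \<Rightarrow> 't flow" where
  "next_flow f = ((fst (fst f), Suc (snd (fst f))), (fst (snd f), Suc (snd (snd f))))"

text \<open>x q is the start time of task instance q, k f t the amount of flow f
  transmitted at time t.\<close>

definition feasible :: "'t gnn_job \<Rightarrow> ('t inst \<Rightarrow> nat) \<Rightarrow> ('t flow \<Rightarrow> nat \<Rightarrow> real) \<Rightarrow> bool" where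
  "feasible G x k \<longleftrightarrow>
     (\<forall>j\<in>tasks G. \<forall>n\<in>{1..niter G}. 1 \<le> x (j, n))
   \<and> (\<forall>g\<in>Jg G. x (g, 1) = 1)
   \<and> (\<forall>f\<in>flows G.
        (\<forall>t. 0 \<le> k f t)
      \<and> (\<forall>t. k f t \<noteq> 0 \<longrightarrow> x (fst f) + ptime G (fst (fst f)) \<le> t \<and> t < x (snd f))
      \<and> (\<Sum>t\<in>{x (fst f) + ptime G (fst (fst f)) ..< x (snd f)}. k f t) = vol G f)
   \<and> (\<forall>q q'. succ G q q' \<and> place G (fst q) = place G (fst q')
        \<longrightarrow> x q + ptime G (fst q) \<le> x q')
   \<and> (\<forall>j\<in>tasks G. \<forall>n. 1 \<le> n \<and> n < niter G \<longrightarrow> x (j, n) + ptime G j \<le> x (j, Suc n))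
   \<and> (\<forall>f\<in>flows G. next_flow f \<in> flows G \<longrightarrow>
        (\<forall>t t'. k f t \<noteq> 0 \<and> k (next_flow f) t' \<noteq> 0 \<longrightarrow> t < t'))
   \<and> (\<forall>m t. (\<Sum>f\<in>{f\<in>flows G. src_mach G f = m}. k f t) \<le> Bout G m)
   \<and> (\<forall>m t. (\<Sum>f\<in>{f\<in>flows G. dst_mach G f = m}. k f t) \<le> Bin G m)"

definition makespan :: "'t gnn_job \<Rightarrow> ('t inst \<Rightarrow> nat) \<Rightarrow> nat" where
  "makespan G x = Max ((\<lambda>j. x (j, niter G) + ptime G j) ` tasks G)"

record 't oes_st =
  st   :: "'t inst \<Rightarrow> nat option"
  sent :: "'t flow \<Rightarrow> real"
  fin  :: "'t flow \<Rightarrow> nat option"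
  act  :: "'t flow set"
  pend :: "'t flow set"

definition oes_init :: "'t oes_st" where
  "oes_init = \<lparr>st = (\<lambda>_. None), sent = (\<lambda>_. 0), fin = (\<lambda>_. None), act = {}, pend = {}\<rparr>"

text \<open>Task instance q has finished at time t-1 or earlier.\<close>
definition done_by :: "'t gnn_job \<Rightarrow> 't oes_st \<Rightarrow> 't inst \<Rightarrow> nat \<Rightarrow> bool" where
  "done_by G \<sigma> q t \<longleftrightarrow> (\<exists>s. st \<sigma> q = Some s \<and> s + ptime G (fst q) \<le> t)"

definition ready :: "'t gnn_job \<Rightarrow> 't oes_st \<Rightarrow> nat \<Rightarrow> 't inst \<Rightarrow> bool" where
  "ready G \<sigma> t q \<longleftrightarrow>
     fst q \<in> tasks G \<and> 1 \<le> snd q \<and> snd q \<le> niter G \<and> st \<sigma> q = None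
   \<and> (snd q = 1 \<or> done_by G \<sigma> (fst q, snd q - 1) t)
   \<and> (\<forall>q0. succ G q0 q \<longrightarrow>
        (if place G (fst q0) = place G (fst q) then done_by G \<sigma> q0 t
         else (\<exists>s. fin \<sigma> (q0, q) = Some s \<and> s < t)))"

text \<open>One time step t of OES, applied to the state after step t-1.\<close>
definition oes_step :: "'t gnn_job \<Rightarrow> nat \<Rightarrow> 't oes_st \<Rightarrow> 't oes_st" where
  "oes_step G t \<sigma> =
    (let
       \<comment> \<open>1. start every task whose dependencies are satisfied\<close>
       st1 = (\<lambda>q. if ready G \<sigma> t q then Some t else st \<sigma> q);
       \<comment> \<open>2. flows out of tasks that finished at t-1\<close>
       newf = {f\<in>flows G. \<exists>s. st \<sigma> (fst f) = Some s \<and> s + ptime G (fst (fst f)) = t};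
       newp = {f\<in>newf. \<exists>g. next_flow g = f \<and> g \<in> act \<sigma> \<union> pend \<sigma>};
       newa = newf - newp;
       \<comment> \<open>3. pending flows whose previous-iteration flow finished at t-1 become active\<close>
       prom = {f\<in>pend \<sigma> \<union> newp. \<exists>g. fin \<sigma> g = Some (t - 1) \<and> next_flow g = f};
       act1 = act \<sigma> \<union> newa \<union> prom;
       pend1 = (pend \<sigma> \<union> newp) - prom;
       \<comment> \<open>4. transmission with the rate min(B_in/Delta_in, B_out/Delta_out)\<close>
       din = (\<lambda>m. card {f\<in>act1. dst_mach G f = m});
       dout = (\<lambda>m. card {f\<in>act1. src_mach G f = m});
       rate = (\<lambda>f. min (Bin G (dst_mach G f) / real (din (dst_mach G f)))
                        (Bout G (src_mach G f) / real (dout (src_mach G f))));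
       amt = (\<lambda>f. if f \<in> act1 then min (rate f) (vol G f - sent \<sigma> f) else 0);
       sent1 = (\<lambda>f. sent \<sigma> f + amt f);
       fdone = {f\<in>act1. vol G f \<le> sent1 f};
       fin1 = (\<lambda>f. if f \<in> fdone then Some t else fin \<sigma> f)
     in \<lparr>st = st1, sent = sent1, fin = fin1, act = act1 - fdone, pend = pend1\<rparr>)"

text \<open>State of OES after time step t (t = 0: before the start).\<close>
primrec oes_state :: "'t gnn_job \<Rightarrow> nat \<Rightarrow> 't oes_st" where
  "oes_state G 0 = oes_init"
| "oes_state G (Suc t) = oes_step G (Suc t) (oes_state G t)"

definition oes_start :: "'t gnn_job \<Rightarrow> 't inst \<Rightarrow> nat \<Rightarrow> bool" where
  "oes_start G q s \<longleftrightarrow> st (oes_state G s) q = Some s"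

definition oes_terminates :: "'t gnn_job \<Rightarrow> bool" where
  "oes_terminates G \<longleftrightarrow> (\<forall>j\<in>tasks G. \<exists>s. oes_start G (j, niter G) s)"

definition oes_makespan :: "'t gnn_job \<Rightarrow> nat" where
  "oes_makespan G = Max ((\<lambda>j. (THE s. oes_start G (j, niter G) s) + ptime G j) ` tasks G)"

definition one_iter_flows :: "'t gnn_job \<Rightarrow> ('t \<times> 't) set" where
  "one_iter_flows G = {(j, j'). (iter_edge G j j' \<or> next_edge G j j') \<and> place G j \<noteq> place G j'}"

definition deg_in :: "'t gnn_job \<Rightarrow> nat \<Rightarrow> nat" where
  "deg_in G m = card {e\<in>one_iter_flows G. place G (snd e) = m}"

definition deg_out :: "'t gnn_job \<Rightarrow> nat \<Rightarrow> nat" where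
  "deg_out G m = card {e\<in>one_iter_flows G. place G (fst e) = m}"

definition Delta :: "'t gnn_job \<Rightarrow> nat" where
  "Delta G = Max ((\<lambda>m. max (deg_in G m) (deg_out G m)) ` {1..nmach G})"

definition wf_job :: "'t gnn_job \<Rightarrow> bool" where
  "wf_job G \<longleftrightarrow>
     finite (tasks G)
   \<and> Jg G \<inter> Js G = {} \<and> Jg G \<inter> Jw G = {} \<and> Jg G \<inter> Jps G = {}
   \<and> Js G \<inter> Jw G = {} \<and> Js G \<inter> Jps G = {} \<and> Jw G \<inter> Jps G = {}
   \<and> 1 \<le> nmach G \<and> 1 \<le> niter G
   \<and> (\<forall>j\<in>tasks G. place G j \<in> {1..nmach G})
   \<and> (\<forall>j\<in>tasks G. 1 \<le> ptime G j)
   \<and> (\<forall>m\<in>{1..nmach G}. 0 < Bin G m \<and> 0 < Bout G m)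
   \<and> (\<forall>f\<in>flows G. 0 < vol G f)"

end

theory Submission imports Defs begin

text \<open>
  While a flow f is active under OES, no other iteration of its task pair is active, so at most
  Delta active flows share the source or the destination machine of f, and f is sent at a rate of
  at least min(B_in, B_out) / Delta. A feasible offline schedule x sends f within some window
  [F, L] at rate at most min(B_in, B_out), hence OES needs at most Delta (L - F + 1) steps for f
  once it is active. Induction along the dependencies then shows that OES starts every task
  instance q by Delta x(q) and finishes every flow before Delta (L + 1). The same induction with
  crude bounds shows that OES terminates at all.
\<close>

lemma scaled_add_le: "1 \<le> (D::nat) \<Longrightarrow> a + p \<le> b \<Longrightarrow> D * a + p \<le> D * b"
  by (metis add_mult_distrib2 le_trans mult_le_mono2 mult_1 mult_le_mono1 nat_add_left_cancel_le)

lemma mult_add_le_mult_of_less: "a < b \<Longrightarrow> c * a + c \<le> c * (b::nat)"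
  using mult_le_mono2[of "a + 1" b c] by simp

lemma le_Suc_ceiling_div_mult: "0 < r \<Longrightarrow> v \<le> real (Suc (nat \<lceil>v / r\<rceil>)) * (r::real)"
  using real_nat_ceiling_ge[of "v / r"] by (simp add: divide_le_eq algebra_simps)

definition oes_new_flows :: "'t gnn_job \<Rightarrow> nat \<Rightarrow> 't oes_st \<Rightarrow> 't flow set" where
  "oes_new_flows G t \<sigma> = {f\<in>flows G. \<exists>s. st \<sigma> (fst f) = Some s \<and> s + ptime G (fst (fst f)) = t}"

definition oes_new_pending :: "'t gnn_job \<Rightarrow> nat \<Rightarrow> 't oes_st \<Rightarrow> 't flow set" where
  "oes_new_pending G t \<sigma> = {f\<in>oes_new_flows G t \<sigma>. \<exists>g. next_flow g = f \<and> g \<in> act \<sigma> \<union> pend \<sigma>}"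

definition oes_promoted :: "'t gnn_job \<Rightarrow> nat \<Rightarrow> 't oes_st \<Rightarrow> 't flow set" where
  "oes_promoted G t \<sigma> =
     {f\<in>pend \<sigma> \<union> oes_new_pending G t \<sigma>. \<exists>g. fin \<sigma> g = Some (t - 1) \<and> next_flow g = f}"

definition oes_active :: "'t gnn_job \<Rightarrow> nat \<Rightarrow> 't oes_st \<Rightarrow> 't flow set" where
  "oes_active G t \<sigma> = act \<sigma> \<union> (oes_new_flows G t \<sigma> - oes_new_pending G t \<sigma>) \<union> oes_promoted G t \<sigma>"

definition oes_pending :: "'t gnn_job \<Rightarrow> nat \<Rightarrow> 't oes_st \<Rightarrow> 't flow set" where
  "oes_pending G t \<sigma> = (pend \<sigma> \<union> oes_new_pending G t \<sigma>) - oes_promoted G t \<sigma>"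

definition oes_rate :: "'t gnn_job \<Rightarrow> nat \<Rightarrow> 't oes_st \<Rightarrow> 't flow \<Rightarrow> real" where
  "oes_rate G t \<sigma> f =
     min (Bin G (dst_mach G f) / real (card {f'\<in>oes_active G t \<sigma>. dst_mach G f' = dst_mach G f}))
         (Bout G (src_mach G f) / real (card {f'\<in>oes_active G t \<sigma>. src_mach G f' = src_mach G f}))"

definition oes_amount :: "'t gnn_job \<Rightarrow> nat \<Rightarrow> 't oes_st \<Rightarrow> 't flow \<Rightarrow> real" where
  "oes_amount G t \<sigma> f =
     (if f \<in> oes_active G t \<sigma> then min (oes_rate G t \<sigma> f) (vol G f - sent \<sigma> f) else 0)"

definition oes_completed :: "'t gnn_job \<Rightarrow> nat \<Rightarrow> 't oes_st \<Rightarrow> 't flow set" where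
  "oes_completed G t \<sigma> = {f\<in>oes_active G t \<sigma>. vol G f \<le> sent \<sigma> f + oes_amount G t \<sigma> f}"

lemma oes_step_eq: "oes_step G t \<sigma> =
  \<lparr>st = (\<lambda>q. if ready G \<sigma> t q then Some t else st \<sigma> q),
   sent = (\<lambda>f. sent \<sigma> f + oes_amount G t \<sigma> f),
   fin = (\<lambda>f. if f \<in> oes_completed G t \<sigma> then Some t else fin \<sigma> f),
   act = oes_active G t \<sigma> - oes_completed G t \<sigma>, pend = oes_pending G t \<sigma>\<rparr>"
  unfolding oes_step_def Let_def oes_new_flows_def oes_new_pending_def oes_promoted_def
    oes_active_def oes_pending_def oes_rate_def oes_amount_def oes_completed_def
  by simp

lemma st_oes_step: "st (oes_step G t \<sigma>) q = (if ready G \<sigma> t q then Some t else st \<sigma> q)"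
  and sent_oes_step: "sent (oes_step G t \<sigma>) f = sent \<sigma> f + oes_amount G t \<sigma> f"
  and fin_oes_step: "fin (oes_step G t \<sigma>) f = (if f \<in> oes_completed G t \<sigma> then Some t else fin \<sigma> f)"
  and act_oes_step: "act (oes_step G t \<sigma>) = oes_active G t \<sigma> - oes_completed G t \<sigma>"
  and pend_oes_step: "pend (oes_step G t \<sigma>) = oes_pending G t \<sigma>"
  by (simp_all add: oes_step_eq)

lemma oes_completed_subset: "oes_completed G t \<sigma> \<subseteq> oes_active G t \<sigma>"
  by (auto simp: oes_completed_def)

lemma st_oes_step_keep: "st \<sigma> q = Some s \<Longrightarrow> st (oes_step G t \<sigma>) q = Some s"
  by (simp add: st_oes_step ready_def)

lemma st_oes_step_cases: "st (oes_step G t \<sigma>) q = Some s \<Longrightarrow>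
   st \<sigma> q = Some s \<or> (s = t \<and> st \<sigma> q = None \<and> ready G \<sigma> t q)"
  by (auto simp: st_oes_step ready_def split: if_splits)

definition task_pair :: "'t flow \<Rightarrow> 't \<times> 't" where
  "task_pair f = (fst (fst f), fst (snd f))"

text \<open>Only meaningful for flows of iteration at least 2; on iteration 1 it yields the junk
  iteration 0.\<close>
definition prev_flow :: "'t flow \<Rightarrow> 't flow" where
  "prev_flow f = ((fst (fst f), snd (fst f) - 1), (fst (snd f), snd (snd f) - 1))"

definition valid_inst :: "'t gnn_job \<Rightarrow> 't inst \<Rightarrow> bool" where
  "valid_inst G q \<longleftrightarrow> fst q \<in> tasks G \<and> 1 \<le> snd q \<and> snd q \<le> niter G"

definition stage :: "'t gnn_job \<Rightarrow> 't \<Rightarrow> nat" where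
  "stage G j = (if j \<in> Jg G then 0 else if j \<in> Js G then 1 else if j \<in> Jw G then 2 else 3)"

definition rank :: "'t gnn_job \<Rightarrow> 't inst \<Rightarrow> nat" where
  "rank G q = 4 * snd q + stage G (fst q)"

lemma prev_flow_next_flow [simp]: "prev_flow (next_flow g) = g"
  by (simp add: prev_flow_def next_flow_def)

lemma task_pair_prev_flow [simp]: "task_pair (prev_flow f) = task_pair f"
  by (simp add: task_pair_def prev_flow_def)

lemma fst_prev_flow: "fst (prev_flow f) = (fst (fst f), snd (fst f) - 1)"
  by (simp add: prev_flow_def)

lemma rank_prev_iter: "2 \<le> n \<Longrightarrow> rank G (j, n - 1) + 4 = rank G (j, n)"
  by (simp add: rank_def)

locale wf_gnn_job =
  fixes G :: "'t gnn_job"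
  assumes wf: "wf_job G"
begin

lemma finite_tasks: "finite (tasks G)"
  using wf by (simp add: wf_job_def)

lemma roles_disjoint: "Jg G \<inter> Js G = {}" "Jg G \<inter> Jw G = {}" "Jg G \<inter> Jps G = {}"
   "Js G \<inter> Jw G = {}" "Js G \<inter> Jps G = {}" "Jw G \<inter> Jps G = {}"
  using wf by (auto simp add: wf_job_def)

lemma ptime_pos: "j \<in> tasks G \<Longrightarrow> 1 \<le> ptime G j"
  using wf by (simp add: wf_job_def)

lemma place_in_machines: "j \<in> tasks G \<Longrightarrow> place G j \<in> {1..nmach G}"
  using wf by (simp add: wf_job_def)

lemma bandwidth_pos: "m \<in> {1..nmach G} \<Longrightarrow> 0 < Bin G m \<and> 0 < Bout G m"
  using wf by (simp add: wf_job_def)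

lemma vol_pos: "f \<in> flows G \<Longrightarrow> 0 < vol G f"
  using wf by (simp add: wf_job_def)

lemma niter_pos: "1 \<le> niter G"
  using wf by (simp add: wf_job_def)

lemma succ_valid: "succ G q0 q \<Longrightarrow> valid_inst G q0 \<and> valid_inst G q"
  by (auto simp: succ_def valid_inst_def iter_edge_def next_edge_def tasks_def)

lemma flows_valid: "f \<in> flows G \<Longrightarrow> valid_inst G (fst f) \<and> valid_inst G (snd f)"
  by (auto simp: flows_def dest: succ_valid)

lemma flows_ptime_pos: "f \<in> flows G \<Longrightarrow> 1 \<le> ptime G (fst (fst f))"
  using flows_valid ptime_pos by (simp add: valid_inst_def)

lemma flows_machines: "f \<in> flows G \<Longrightarrow> src_mach G f \<in> {1..nmach G} \<and> dst_mach G f \<in> {1..nmach G}"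
  using flows_valid place_in_machines by (simp add: valid_inst_def src_mach_def dst_mach_def)

lemma flows_dst_iter: "f \<in> flows G \<Longrightarrow>
   snd (snd f) = snd (fst f) + (if next_edge G (fst (fst f)) (fst (snd f)) then 1 else 0)"
  using roles_disjoint by (auto simp: flows_def succ_def iter_edge_def next_edge_def)

lemma flows_task_pair_eq:
  "f \<in> flows G \<Longrightarrow> g \<in> flows G \<Longrightarrow> task_pair f = task_pair g \<Longrightarrow> snd (fst f) = snd (fst g) \<Longrightarrow> f = g"
  by (frule flows_dst_iter, drule flows_dst_iter[of g]) (cases f; cases g; auto simp: task_pair_def)

lemma prev_flow_flows: "f \<in> flows G \<Longrightarrow> 2 \<le> snd (fst f) \<Longrightarrow>
   prev_flow f \<in> flows G \<and> next_flow (prev_flow f) = f"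
  by (frule flows_dst_iter) (cases f; auto simp: flows_def succ_def prev_flow_def next_flow_def)

lemma finite_flows: "finite (flows G)"
proof (rule finite_subset)
  show "flows G \<subseteq> (tasks G \<times> {1..niter G}) \<times> (tasks G \<times> {1..niter G})"
    using flows_valid by (auto simp: valid_inst_def)
qed (simp add: finite_tasks)

lemma task_pair_one_iter_flows: "f \<in> flows G \<Longrightarrow> task_pair f \<in> one_iter_flows G"
  by (auto simp: flows_def succ_def one_iter_flows_def task_pair_def)

lemma finite_one_iter_flows: "finite (one_iter_flows G)"
proof (rule finite_subset)
  show "one_iter_flows G \<subseteq> tasks G \<times> tasks G"
    by (auto simp: one_iter_flows_def iter_edge_def next_edge_def tasks_def)
qed (simp add: finite_tasks)

lemma rank_succ: "succ G q0 q \<Longrightarrow> rank G q0 < rank G q"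
  using roles_disjoint by (auto simp: succ_def rank_def stage_def iter_edge_def next_edge_def)

lemma deg_le_Delta: "m \<in> {1..nmach G} \<Longrightarrow> deg_in G m \<le> Delta G \<and> deg_out G m \<le> Delta G"
proof -
  assume m: "m \<in> {1..nmach G}"
  have "max (deg_in G m) (deg_out G m) \<le> Delta G"
    unfolding Delta_def by (rule Max_ge) (use m in auto)
  then show ?thesis by simp
qed

lemma Delta_pos: "one_iter_flows G \<noteq> {} \<Longrightarrow> 1 \<le> Delta G"
proof -
  assume "one_iter_flows G \<noteq> {}"
  then obtain e where e: "e \<in> one_iter_flows G" by blast
  let ?m = "place G (snd e)"
  have "snd e \<in> tasks G"
    using e by (auto simp: one_iter_flows_def iter_edge_def next_edge_def tasks_def)
  then have m: "?m \<in> {1..nmach G}" by (rule place_in_machines)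
  have "e \<in> {e'\<in>one_iter_flows G. place G (snd e') = ?m}" using e by simp
  then have "0 < deg_in G ?m"
    unfolding deg_in_def using finite_one_iter_flows card_gt_0_iff by fastforce
  then show ?thesis using deg_le_Delta[OF m] by simp
qed

lemma tasks_nonempty: "one_iter_flows G \<noteq> {} \<Longrightarrow> tasks G \<noteq> {}"
  by (auto simp: one_iter_flows_def iter_edge_def next_edge_def tasks_def)


section \<open>An invariant of OES\<close>

definition starts_bounded :: "nat \<Rightarrow> 't oes_st \<Rightarrow> bool" where
  "starts_bounded t \<sigma> \<longleftrightarrow> (\<forall>q s. st \<sigma> q = Some s \<longrightarrow> 1 \<le> s \<and> s \<le> t)"

definition finishes_consistent :: "nat \<Rightarrow> 't oes_st \<Rightarrow> bool" where
  "finishes_consistent t \<sigma> \<longleftrightarrow> (\<forall>f e. fin \<sigma> f = Some e \<longrightarrow> 1 \<le> e \<and> e \<le> t \<and> f \<in> flows G \<and>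
     (\<exists>s. st \<sigma> (fst f) = Some s \<and> s + ptime G (fst (fst f)) \<le> e))"

definition queued_flows_ready :: "nat \<Rightarrow> 't oes_st \<Rightarrow> bool" where
  "queued_flows_ready t \<sigma> \<longleftrightarrow> (\<forall>f \<in> act \<sigma> \<union> pend \<sigma>. f \<in> flows G \<and> fin \<sigma> f = None \<and>
     (\<exists>s. st \<sigma> (fst f) = Some s \<and> s + ptime G (fst (fst f)) \<le> t))"

definition ready_flows_queued :: "nat \<Rightarrow> 't oes_st \<Rightarrow> bool" where
  "ready_flows_queued t \<sigma> \<longleftrightarrow> (\<forall>f\<in>flows G. \<forall>s.
     st \<sigma> (fst f) = Some s \<and> s + ptime G (fst (fst f)) \<le> t \<and> fin \<sigma> f = None
     \<longrightarrow> f \<in> act \<sigma> \<union> pend \<sigma>)"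

definition earlier_iterations_finished :: "'t oes_st \<Rightarrow> bool" where
  "earlier_iterations_finished \<sigma> \<longleftrightarrow> (\<forall>f\<in>flows G. \<forall>g\<in>flows G.
     task_pair g = task_pair f \<and> snd (fst g) < snd (fst f) \<and> (f \<in> act \<sigma> \<or> fin \<sigma> f \<noteq> None)
     \<longrightarrow> fin \<sigma> g \<noteq> None)"

definition iterations_ordered :: "'t oes_st \<Rightarrow> bool" where
  "iterations_ordered \<sigma> \<longleftrightarrow> (\<forall>j n s. st \<sigma> (j, n) = Some s \<and> 2 \<le> n \<longrightarrow>
     (\<exists>s'. st \<sigma> (j, n - 1) = Some s' \<and> s' + ptime G j \<le> s))"

definition sent_below_vol :: "'t oes_st \<Rightarrow> bool" where
  "sent_below_vol \<sigma> \<longleftrightarrow> (\<forall>f\<in>flows G. fin \<sigma> f = None \<longrightarrow> 0 \<le> sent \<sigma> f \<and> sent \<sigma> f < vol G f)"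

definition oes_inv :: "nat \<Rightarrow> 't oes_st \<Rightarrow> bool" where
  "oes_inv t \<sigma> \<longleftrightarrow> starts_bounded t \<sigma> \<and> finishes_consistent t \<sigma> \<and> queued_flows_ready t \<sigma>
     \<and> act \<sigma> \<inter> pend \<sigma> = {} \<and> ready_flows_queued t \<sigma> \<and> earlier_iterations_finished \<sigma>
     \<and> iterations_ordered \<sigma> \<and> sent_below_vol \<sigma>"

lemma oes_inv_init: "oes_inv 0 oes_init"
  by (simp add: oes_inv_def starts_bounded_def finishes_consistent_def queued_flows_ready_def
      ready_flows_queued_def earlier_iterations_finished_def iterations_ordered_def
      sent_below_vol_def oes_init_def vol_pos)

context
  fixes t \<sigma> assumes inv: "oes_inv t \<sigma>"
begin

lemma inv_start:
  "st \<sigma> q = Some s \<Longrightarrow> 1 \<le> s \<and> s \<le> t"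
  using inv unfolding oes_inv_def starts_bounded_def by blast

lemma inv_fin:
  "fin \<sigma> f = Some e \<Longrightarrow> 1 \<le> e \<and> e \<le> t \<and> f \<in> flows G \<and>
     (\<exists>s. st \<sigma> (fst f) = Some s \<and> s + ptime G (fst (fst f)) \<le> e)"
  using inv unfolding oes_inv_def finishes_consistent_def by blast

lemma inv_queued:
  "f \<in> act \<sigma> \<union> pend \<sigma> \<Longrightarrow> f \<in> flows G \<and> fin \<sigma> f = None \<and>
     (\<exists>s. st \<sigma> (fst f) = Some s \<and> s + ptime G (fst (fst f)) \<le> t)"
  using inv unfolding oes_inv_def queued_flows_ready_def by blast

lemma inv_act_pend_disjoint: "act \<sigma> \<inter> pend \<sigma> = {}"
  using inv by (simp add: oes_inv_def)

lemma inv_ready_queued: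
  "f \<in> flows G \<Longrightarrow> st \<sigma> (fst f) = Some s \<Longrightarrow> s + ptime G (fst (fst f)) \<le> t \<Longrightarrow>
     fin \<sigma> f = None \<Longrightarrow> f \<in> act \<sigma> \<union> pend \<sigma>"
  using inv unfolding oes_inv_def ready_flows_queued_def by blast

lemma inv_earlier_finished:
  "f \<in> flows G \<Longrightarrow> g \<in> flows G \<Longrightarrow> task_pair g = task_pair f \<Longrightarrow> snd (fst g) < snd (fst f) \<Longrightarrow>
     f \<in> act \<sigma> \<or> fin \<sigma> f \<noteq> None \<Longrightarrow> fin \<sigma> g \<noteq> None"
  using inv unfolding oes_inv_def earlier_iterations_finished_def by blast

lemma inv_prev_iter:
  "st \<sigma> (j, n) = Some s \<Longrightarrow> 2 \<le> n \<Longrightarrow> \<exists>s'. st \<sigma> (j, n - 1) = Some s' \<and> s' + ptime G j \<le> s"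
  using inv unfolding oes_inv_def iterations_ordered_def by blast

lemma inv_sent:
  "f \<in> flows G \<Longrightarrow> fin \<sigma> f = None \<Longrightarrow> 0 \<le> sent \<sigma> f \<and> sent \<sigma> f < vol G f"
  using inv unfolding oes_inv_def sent_below_vol_def by blast

lemma new_flow_unfinished: "f \<in> oes_new_flows G (Suc t) \<sigma> \<Longrightarrow> fin \<sigma> f = None"
  using inv_fin[of f] by (cases "fin \<sigma> f") (auto simp: oes_new_flows_def)

lemma oes_active_flow: "f \<in> oes_active G (Suc t) \<sigma> \<Longrightarrow> f \<in> flows G \<and> fin \<sigma> f = None \<and>
    (\<exists>s. st \<sigma> (fst f) = Some s \<and> s + ptime G (fst (fst f)) \<le> Suc t)"
proof -
  assume f: "f \<in> oes_active G (Suc t) \<sigma>"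
  then consider "f \<in> act \<sigma> \<union> pend \<sigma>" | "f \<in> oes_new_flows G (Suc t) \<sigma>"
    unfolding oes_active_def oes_promoted_def oes_new_pending_def by blast
  then show ?thesis
  proof cases
    case 1
    then show ?thesis using inv_queued by fastforce
  next
    case 2
    then show ?thesis using new_flow_unfinished by (fastforce simp: oes_new_flows_def)
  qed
qed

lemma fin_oes_step_keep: "fin \<sigma> f = Some e \<Longrightarrow> fin (oes_step G (Suc t) \<sigma>) f = Some e"
  using oes_completed_subset oes_active_flow by (fastforce simp: fin_oes_step)

lemma fin_oes_step_cases: "fin (oes_step G (Suc t) \<sigma>) f = Some e \<Longrightarrow>
    fin \<sigma> f = Some e \<or> (e = Suc t \<and> f \<in> oes_completed G (Suc t) \<sigma> \<and> fin \<sigma> f = None)"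
  by (cases "fin \<sigma> f") (auto simp: fin_oes_step_keep, auto simp: fin_oes_step split: if_splits)

lemma fin_oes_step_None: "fin (oes_step G (Suc t) \<sigma>) f = None \<Longrightarrow>
    fin \<sigma> f = None \<and> f \<notin> oes_completed G (Suc t) \<sigma>"
  by (auto simp: fin_oes_step split: if_splits)

lemma oes_active_prev_finished:
  assumes f: "f \<in> oes_active G (Suc t) \<sigma>" and n: "2 \<le> snd (fst f)"
  shows "fin \<sigma> (prev_flow f) \<noteq> None"
proof -
  have ff: "f \<in> flows G" using oes_active_flow[OF f] by simp
  have pf: "prev_flow f \<in> flows G" "next_flow (prev_flow f) = f" using prev_flow_flows[OF ff n] by auto
  consider "f \<in> act \<sigma>" | "f \<in> oes_new_flows G (Suc t) \<sigma> - oes_new_pending G (Suc t) \<sigma>"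
    | "f \<in> oes_promoted G (Suc t) \<sigma>"
    using f by (auto simp: oes_active_def)
  then show ?thesis
  proof cases
    case 1
    show ?thesis by (rule inv_earlier_finished[OF ff pf(1)]) (use 1 n in \<open>auto simp: fst_prev_flow\<close>)
  next
    case 2
    then obtain s where s: "st \<sigma> (fst f) = Some s" "s + ptime G (fst (fst f)) = Suc t"
      by (auto simp: oes_new_flows_def)
    obtain s' where s': "st \<sigma> (fst (fst f), snd (fst f) - 1) = Some s'" "s' + ptime G (fst (fst f)) \<le> s"
      using inv_prev_iter[of "fst (fst f)" "snd (fst f)" s] s n by (cases "fst f") auto
    have "s \<le> t" using inv_start[OF s(1)] by simp
    show ?thesis
    proof
      assume "fin \<sigma> (prev_flow f) = None"
      with inv_ready_queued[OF pf(1), of s'] s' \<open>s \<le> t\<close> have "prev_flow f \<in> act \<sigma> \<union> pend \<sigma>"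
        by (simp add: fst_prev_flow)
      with 2 pf(2) show False unfolding oes_new_pending_def by blast
    qed
  next
    case 3
    then obtain g where "fin \<sigma> g = Some t" "next_flow g = f" by (auto simp: oes_promoted_def)
    then show ?thesis by auto
  qed
qed

lemma inj_on_task_pair_oes_active: "inj_on task_pair (oes_active G (Suc t) \<sigma>)"
proof -
  have False if a: "f1 \<in> oes_active G (Suc t) \<sigma>" "f2 \<in> oes_active G (Suc t) \<sigma>"
     "task_pair f1 = task_pair f2" "snd (fst f1) < snd (fst f2)" for f1 f2
  proof -
    have f1: "f1 \<in> flows G" "fin \<sigma> f1 = None" using oes_active_flow[OF a(1)] by auto
    have f2: "f2 \<in> flows G" using oes_active_flow[OF a(2)] by auto
    have n2: "2 \<le> snd (fst f2)" using a(4) flows_valid[OF f1(1)] by (simp add: valid_inst_def)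
    have pf: "prev_flow f2 \<in> flows G" using prev_flow_flows[OF f2 n2] by simp
    have fp: "fin \<sigma> (prev_flow f2) \<noteq> None" by (rule oes_active_prev_finished[OF a(2) n2])
    show False
    proof (cases "f1 = prev_flow f2")
      case True then show ?thesis using fp f1 by simp
    next
      case False
      have "snd (fst f1) \<noteq> snd (fst (prev_flow f2))"
        using flows_task_pair_eq[OF f1(1) pf] a False by auto
      then have "snd (fst f1) < snd (fst (prev_flow f2))" using a by (auto simp: fst_prev_flow)
      then show ?thesis using inv_earlier_finished[OF pf f1(1)] a fp f1 by simp
    qed
  qed
  moreover have "f1 = f2" if "f1 \<in> oes_active G (Suc t) \<sigma>" "f2 \<in> oes_active G (Suc t) \<sigma>"
      "task_pair f1 = task_pair f2" "snd (fst f1) = snd (fst f2)" for f1 f2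
    using that flows_task_pair_eq oes_active_flow by blast
  ultimately show ?thesis
    by (intro inj_onI) (metis linorder_cases)
qed

lemma oes_pending_active_disjoint: "oes_pending G (Suc t) \<sigma> \<inter> oes_active G (Suc t) \<sigma> = {}"
proof (rule ccontr)
  assume "oes_pending G (Suc t) \<sigma> \<inter> oes_active G (Suc t) \<sigma> \<noteq> {}"
  then obtain f where f1: "f \<in> oes_pending G (Suc t) \<sigma>" and f2: "f \<in> oes_active G (Suc t) \<sigma>" by blast
  from f1 have nprom: "f \<notin> oes_promoted G (Suc t) \<sigma>" by (simp add: oes_pending_def)
  from f1 consider "f \<in> pend \<sigma>" | "f \<in> oes_new_pending G (Suc t) \<sigma>" by (auto simp: oes_pending_def)
  then show False
  proof cases
    case 1
    from inv_queued[of f] 1 obtain s where s: "st \<sigma> (fst f) = Some s" "s + ptime G (fst (fst f)) \<le> t"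
      by auto
    from f2 nprom have "f \<in> act \<sigma> \<or> f \<in> oes_new_flows G (Suc t) \<sigma>" by (auto simp: oes_active_def)
    then show False using inv_act_pend_disjoint 1 s by (auto simp: oes_new_flows_def)
  next
    case 2
    then obtain s where s: "st \<sigma> (fst f) = Some s" "s + ptime G (fst (fst f)) = Suc t"
      by (auto simp: oes_new_pending_def oes_new_flows_def)
    from f2 nprom 2 have "f \<in> act \<sigma>" by (auto simp: oes_active_def)
    with inv_queued[of f] s show False by auto
  qed
qed


lemma starts_bounded_step: "starts_bounded (Suc t) (oes_step G (Suc t) \<sigma>)"
  unfolding starts_bounded_def
proof (intro allI impI)
  fix q s assume "st (oes_step G (Suc t) \<sigma>) q = Some s"
  from st_oes_step_cases[OF this] inv_start show "1 \<le> s \<and> s \<le> Suc t" by fastforce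
qed

lemma finishes_consistent_step: "finishes_consistent (Suc t) (oes_step G (Suc t) \<sigma>)"
  unfolding finishes_consistent_def
proof (intro allI impI)
  fix f e assume "fin (oes_step G (Suc t) \<sigma>) f = Some e"
  from fin_oes_step_cases[OF this] show "1 \<le> e \<and> e \<le> Suc t \<and> f \<in> flows G \<and>
     (\<exists>s. st (oes_step G (Suc t) \<sigma>) (fst f) = Some s \<and> s + ptime G (fst (fst f)) \<le> e)"
  proof
    assume fe: "fin \<sigma> f = Some e"
    then obtain s where s: "st \<sigma> (fst f) = Some s" "s + ptime G (fst (fst f)) \<le> e"
      using inv_fin by blast
    then show ?thesis using inv_fin[OF fe] st_oes_step_keep[OF s(1)] by auto
  next
    assume "e = Suc t \<and> f \<in> oes_completed G (Suc t) \<sigma> \<and> fin \<sigma> f = None"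
    with oes_completed_subset oes_active_flow[of f] st_oes_step_keep show ?thesis by fastforce
  qed
qed

lemma queued_flows_ready_step: "queued_flows_ready (Suc t) (oes_step G (Suc t) \<sigma>)"
  unfolding queued_flows_ready_def
proof
  fix f assume a: "f \<in> act (oes_step G (Suc t) \<sigma>) \<union> pend (oes_step G (Suc t) \<sigma>)"
  then have a': "f \<in> oes_active G (Suc t) \<sigma> \<union> oes_pending G (Suc t) \<sigma>" "f \<notin> oes_completed G (Suc t) \<sigma>"
    using oes_pending_active_disjoint oes_completed_subset[of G "Suc t" \<sigma>]
    by (auto simp: act_oes_step pend_oes_step)
  have "f \<in> flows G \<and> fin \<sigma> f = None \<and>
      (\<exists>s. st \<sigma> (fst f) = Some s \<and> s + ptime G (fst (fst f)) \<le> Suc t)"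
  proof (cases "f \<in> oes_active G (Suc t) \<sigma>")
    case True
    then show ?thesis using oes_active_flow by blast
  next
    case False
    with a' have "f \<in> pend \<sigma> \<or> f \<in> oes_new_flows G (Suc t) \<sigma>"
      by (auto simp: oes_pending_def oes_new_pending_def)
    then show ?thesis
    proof
      assume "f \<in> pend \<sigma>"
      then show ?thesis using inv_queued[of f] by fastforce
    next
      assume "f \<in> oes_new_flows G (Suc t) \<sigma>"
      then show ?thesis using new_flow_unfinished by (fastforce simp: oes_new_flows_def)
    qed
  qed
  with a'(2) st_oes_step_keep show "f \<in> flows G \<and> fin (oes_step G (Suc t) \<sigma>) f = None \<and>
      (\<exists>s. st (oes_step G (Suc t) \<sigma>) (fst f) = Some s \<and> s + ptime G (fst (fst f)) \<le> Suc t)"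
    by (fastforce simp: fin_oes_step)
qed

lemma ready_flows_queued_step: "ready_flows_queued (Suc t) (oes_step G (Suc t) \<sigma>)"
  unfolding ready_flows_queued_def
proof (intro ballI allI impI)
  fix f s assume ff: "f \<in> flows G" and a: "st (oes_step G (Suc t) \<sigma>) (fst f) = Some s \<and>
      s + ptime G (fst (fst f)) \<le> Suc t \<and> fin (oes_step G (Suc t) \<sigma>) f = None"
  have fn: "fin \<sigma> f = None" and nd: "f \<notin> oes_completed G (Suc t) \<sigma>"
    using fin_oes_step_None a by auto
  have so: "st \<sigma> (fst f) = Some s"
    using st_oes_step_cases[of G "Suc t" \<sigma> "fst f" s] a flows_ptime_pos[OF ff] by auto
  have "f \<in> oes_active G (Suc t) \<sigma> \<union> oes_pending G (Suc t) \<sigma>"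
  proof (cases "s + ptime G (fst (fst f)) \<le> t")
    case True
    with inv_ready_queued[OF ff so _ fn] have "f \<in> act \<sigma> \<union> pend \<sigma>" by simp
    then show ?thesis by (auto simp: oes_active_def oes_pending_def)
  next
    case False
    with a ff so have "f \<in> oes_new_flows G (Suc t) \<sigma>" by (auto simp: oes_new_flows_def)
    then show ?thesis by (auto simp: oes_active_def oes_pending_def)
  qed
  with nd show "f \<in> act (oes_step G (Suc t) \<sigma>) \<union> pend (oes_step G (Suc t) \<sigma>)"
    by (auto simp: act_oes_step pend_oes_step)
qed

lemma earlier_iterations_finished_step: "earlier_iterations_finished (oes_step G (Suc t) \<sigma>)"
  unfolding earlier_iterations_finished_def
proof (intro ballI impI)
  fix f g assume ff: "f \<in> flows G" and gf: "g \<in> flows G" and a: "task_pair g = task_pair f \<and>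
      snd (fst g) < snd (fst f) \<and>
      (f \<in> act (oes_step G (Suc t) \<sigma>) \<or> fin (oes_step G (Suc t) \<sigma>) f \<noteq> None)"
  have "fin \<sigma> g \<noteq> None"
  proof (cases "f \<in> act \<sigma> \<or> fin \<sigma> f \<noteq> None")
    case True
    with inv_earlier_finished[OF ff gf] a show ?thesis by blast
  next
    case False
    with a have fa: "f \<in> oes_active G (Suc t) \<sigma>"
      using oes_completed_subset by (auto simp: act_oes_step fin_oes_step split: if_splits)
    have n2: "2 \<le> snd (fst f)" using a flows_valid[OF gf] by (simp add: valid_inst_def)
    have pf: "prev_flow f \<in> flows G" using prev_flow_flows[OF ff n2] by simp
    have fp: "fin \<sigma> (prev_flow f) \<noteq> None" by (rule oes_active_prev_finished[OF fa n2])
    show ?thesis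
    proof (cases "g = prev_flow f")
      case False
      have "snd (fst g) \<noteq> snd (fst (prev_flow f))"
        using flows_task_pair_eq[OF gf pf] a False by auto
      then have "snd (fst g) < snd (fst (prev_flow f))" using a by (auto simp: fst_prev_flow)
      then show ?thesis using inv_earlier_finished[OF pf gf] a fp by simp
    qed (use fp in simp)
  qed
  then show "fin (oes_step G (Suc t) \<sigma>) g \<noteq> None"
    using fin_oes_step_keep by (metis option.exhaust option.distinct(1))
qed

lemma iterations_ordered_step: "iterations_ordered (oes_step G (Suc t) \<sigma>)"
  unfolding iterations_ordered_def
proof (intro allI impI)
  fix j n s assume a: "st (oes_step G (Suc t) \<sigma>) (j, n) = Some s \<and> 2 \<le> n"
  then consider "st \<sigma> (j, n) = Some s" | "s = Suc t" "ready G \<sigma> (Suc t) (j, n)"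
    using st_oes_step_cases by blast
  then show "\<exists>s'. st (oes_step G (Suc t) \<sigma>) (j, n - 1) = Some s' \<and> s' + ptime G j \<le> s"
  proof cases
    case 1
    then show ?thesis using inv_prev_iter a st_oes_step_keep by blast
  next
    case 2
    then have "done_by G \<sigma> (j, n - 1) (Suc t)" using a by (simp add: ready_def)
    then obtain s' where "st \<sigma> (j, n - 1) = Some s'" "s' + ptime G j \<le> Suc t"
      by (auto simp: done_by_def)
    then show ?thesis using 2 st_oes_step_keep by blast
  qed
qed

lemma sent_below_vol_step: "sent_below_vol (oes_step G (Suc t) \<sigma>)"
  unfolding sent_below_vol_def
proof (intro ballI impI)
  fix f assume ff: "f \<in> flows G" and a: "fin (oes_step G (Suc t) \<sigma>) f = None"
  have fn: "fin \<sigma> f = None" and nd: "f \<notin> oes_completed G (Suc t) \<sigma>"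
    using fin_oes_step_None a by auto
  have o: "0 \<le> sent \<sigma> f" "sent \<sigma> f < vol G f" using inv_sent[OF ff fn] by auto
  show "0 \<le> sent (oes_step G (Suc t) \<sigma>) f \<and> sent (oes_step G (Suc t) \<sigma>) f < vol G f"
  proof (cases "f \<in> oes_active G (Suc t) \<sigma>")
    case True
    have "0 \<le> oes_rate G (Suc t) \<sigma> f"
      using flows_machines[OF ff] bandwidth_pos[of "src_mach G f"] bandwidth_pos[of "dst_mach G f"]
      by (simp add: oes_rate_def)
    then have "0 \<le> oes_amount G (Suc t) \<sigma> f" using o True by (simp add: oes_amount_def)
    moreover have "sent \<sigma> f + oes_amount G (Suc t) \<sigma> f < vol G f"
      using nd True by (simp add: oes_completed_def)
    ultimately show ?thesis using o by (simp add: sent_oes_step)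
  next
    case False
    then show ?thesis using o by (simp add: sent_oes_step oes_amount_def)
  qed
qed

lemma oes_inv_step: "oes_inv (Suc t) (oes_step G (Suc t) \<sigma>)"
  using starts_bounded_step finishes_consistent_step queued_flows_ready_step
    oes_pending_active_disjoint ready_flows_queued_step earlier_iterations_finished_step
    iterations_ordered_step sent_below_vol_step
  by (auto simp: oes_inv_def act_oes_step pend_oes_step)

end


section \<open>The guaranteed rate\<close>

lemma card_oes_active_le:
  assumes inv: "oes_inv t \<sigma>" and sub: "task_pair ` A \<subseteq> B" "B \<subseteq> one_iter_flows G"
    and A: "A \<subseteq> oes_active G (Suc t) \<sigma>"
  shows "card A \<le> card B"
proof (rule card_inj_on_le)
  show "inj_on task_pair A" using inj_on_task_pair_oes_active[OF inv] A by (rule inj_on_subset)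
  show "finite B" using finite_subset[OF sub(2) finite_one_iter_flows] .
qed (rule sub(1))

lemma card_oes_active_dst:
  assumes inv: "oes_inv t \<sigma>" and f: "f \<in> oes_active G (Suc t) \<sigma>"
  shows "1 \<le> card {f'\<in>oes_active G (Suc t) \<sigma>. dst_mach G f' = dst_mach G f}
       \<and> card {f'\<in>oes_active G (Suc t) \<sigma>. dst_mach G f' = dst_mach G f} \<le> Delta G"
proof
  let ?A = "{f'\<in>oes_active G (Suc t) \<sigma>. dst_mach G f' = dst_mach G f}"
  have ff: "f \<in> flows G" using oes_active_flow[OF inv f] by simp
  have sub: "?A \<subseteq> flows G" using oes_active_flow[OF inv] by blast
  then have "finite ?A" using finite_flows by (rule finite_subset)
  moreover have "f \<in> ?A" using f by simp
  ultimately have "0 < card ?A" using card_gt_0_iff by blast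
  then show "1 \<le> card ?A" by simp
  have "task_pair ` ?A \<subseteq> {e\<in>one_iter_flows G. place G (snd e) = dst_mach G f}"
    using sub task_pair_one_iter_flows by (auto simp: task_pair_def dst_mach_def)
  then have "card ?A \<le> deg_in G (dst_mach G f)" unfolding deg_in_def
    by (rule card_oes_active_le[OF inv]) auto
  then show "card ?A \<le> Delta G" using deg_le_Delta flows_machines[OF ff] by (meson le_trans)
qed

lemma card_oes_active_src:
  assumes inv: "oes_inv t \<sigma>" and f: "f \<in> oes_active G (Suc t) \<sigma>"
  shows "1 \<le> card {f'\<in>oes_active G (Suc t) \<sigma>. src_mach G f' = src_mach G f}
       \<and> card {f'\<in>oes_active G (Suc t) \<sigma>. src_mach G f' = src_mach G f} \<le> Delta G"
proof
  let ?A = "{f'\<in>oes_active G (Suc t) \<sigma>. src_mach G f' = src_mach G f}"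
  have ff: "f \<in> flows G" using oes_active_flow[OF inv f] by simp
  have sub: "?A \<subseteq> flows G" using oes_active_flow[OF inv] by blast
  then have "finite ?A" using finite_flows by (rule finite_subset)
  moreover have "f \<in> ?A" using f by simp
  ultimately have "0 < card ?A" using card_gt_0_iff by blast
  then show "1 \<le> card ?A" by simp
  have "task_pair ` ?A \<subseteq> {e\<in>one_iter_flows G. place G (fst e) = src_mach G f}"
    using sub task_pair_one_iter_flows by (auto simp: task_pair_def src_mach_def)
  then have "card ?A \<le> deg_out G (src_mach G f)" unfolding deg_out_def
    by (rule card_oes_active_le[OF inv]) auto
  then show "card ?A \<le> Delta G" using deg_le_Delta flows_machines[OF ff] by (meson le_trans)
qed

definition guaranteed_rate :: "'t flow \<Rightarrow> real" where
  "guaranteed_rate f = min (Bin G (dst_mach G f)) (Bout G (src_mach G f)) / real (Delta G)"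

lemma guaranteed_rate_pos:
  assumes ff: "f \<in> flows G"
  shows "0 < guaranteed_rate f"
proof -
  have "1 \<le> Delta G" using Delta_pos task_pair_one_iter_flows[OF ff] by blast
  then show ?thesis using flows_machines[OF ff] bandwidth_pos unfolding guaranteed_rate_def by simp
qed

lemma guaranteed_rate_le_oes_rate:
  assumes inv: "oes_inv t \<sigma>" and f: "f \<in> oes_active G (Suc t) \<sigma>"
  shows "guaranteed_rate f \<le> oes_rate G (Suc t) \<sigma> f"
proof -
  let ?cin = "real (card {f'\<in>oes_active G (Suc t) \<sigma>. dst_mach G f' = dst_mach G f})"
  let ?cout = "real (card {f'\<in>oes_active G (Suc t) \<sigma>. src_mach G f' = src_mach G f})"
  have B: "0 < Bin G (dst_mach G f)" "0 < Bout G (src_mach G f)"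
    using oes_active_flow[OF inv f] flows_machines bandwidth_pos by auto
  have cin: "1 \<le> ?cin" "?cin \<le> real (Delta G)" and cout: "1 \<le> ?cout" "?cout \<le> real (Delta G)"
    using card_oes_active_dst[OF inv f] card_oes_active_src[OF inv f] by auto
  have "Bin G (dst_mach G f) / real (Delta G) \<le> Bin G (dst_mach G f) / ?cin"
    by (rule divide_left_mono) (use B cin in auto)
  moreover have "Bout G (src_mach G f) / real (Delta G) \<le> Bout G (src_mach G f) / ?cout"
    by (rule divide_left_mono) (use B cout in auto)
  moreover have "guaranteed_rate f =
      min (Bin G (dst_mach G f) / real (Delta G)) (Bout G (src_mach G f) / real (Delta G))"
    unfolding guaranteed_rate_def by (simp add: min_divide_distrib_right)
  ultimately show ?thesis unfolding oes_rate_def by linarith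
qed


abbreviation S :: "nat \<Rightarrow> 't oes_st" where
  "S t \<equiv> oes_state G t"

lemma oes_inv_state: "oes_inv t (S t)"
proof (induction t)
  case (Suc t)
  then show ?case using oes_inv_step by simp
qed (simp add: oes_inv_init)

lemma st_state_mono:
  assumes "st (S t) q = Some s" and "t \<le> t'"
  shows "st (S t') q = Some s"
  using assms(2)
proof (induction t' rule: dec_induct)
  case (step m)
  then show ?case using st_oes_step_keep by simp
qed (rule assms(1))

lemma st_state_origin: "st (S t) q = Some s \<Longrightarrow> st (S s) q = Some s \<and> 1 \<le> s \<and> s \<le> t"
proof (induction t)
  case (Suc t)
  from st_oes_step_cases[of G "Suc t" "S t" q s] Suc.prems
  consider "st (S t) q = Some s" | "s = Suc t" by auto
  then show ?case using Suc by cases auto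
qed (simp add: oes_init_def)

lemma fin_state_mono:
  assumes "fin (S t) f = Some e" and "t \<le> t'"
  shows "fin (S t') f = Some e"
  using assms(2)
proof (induction t' rule: dec_induct)
  case (step m)
  then show ?case using fin_oes_step_keep[OF oes_inv_state] by simp
qed (rule assms(1))

lemma fin_state_origin: "fin (S t) f = Some e \<Longrightarrow> fin (S e) f = Some e \<and> 1 \<le> e \<and> e \<le> t"
proof (induction t)
  case (Suc t)
  from fin_oes_step_cases[OF oes_inv_state, of t f e] Suc.prems
  consider "fin (S t) f = Some e" | "e = Suc t" by auto
  then show ?case using Suc by cases auto
qed (simp add: oes_init_def)

lemma st_state_started:
  "st (S t) q \<noteq> None \<Longrightarrow> \<exists>s. st (S t) q = Some s \<and> st (S s) q = Some s \<and> 1 \<le> s \<and> s \<le> t"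
  by (cases "st (S t) q") (auto dest: st_state_origin)

lemma fin_state_finished:
  "fin (S t) f \<noteq> None \<Longrightarrow> \<exists>e. fin (S t) f = Some e \<and> fin (S e) f = Some e \<and> 1 \<le> e \<and> e \<le> t"
  by (cases "fin (S t) f") (auto dest: fin_state_origin)

lemma fin_state_None_mono: "fin (S t') f = None \<Longrightarrow> t \<le> t' \<Longrightarrow> fin (S t) f = None"
  by (cases "fin (S t) f") (auto dest: fin_state_mono)

lemma done_by_state:
  assumes started: "st (S a) q \<noteq> None" and finished: "a + ptime G (fst q) \<le> Suc T"
    and q: "fst q \<in> tasks G"
  shows "done_by G (S T) q (Suc T)"
proof -
  obtain s where s: "st (S a) q = Some s" "s \<le> a" using st_state_started[OF started] by blast
  have "a \<le> T" using finished q ptime_pos[of "fst q"] by simp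
  then show ?thesis using s finished st_state_mono[OF s(1)] by (auto simp: done_by_def)
qed

lemma start_when_dependencies_met:
  assumes v: "valid_inst G (j, n)"
    and prev: "n = 1 \<or> (\<exists>a. st (S a) (j, n - 1) \<noteq> None \<and> a + ptime G j \<le> Suc T)"
    and local_pred: "\<And>q0. succ G q0 (j, n) \<Longrightarrow> place G (fst q0) = place G j \<Longrightarrow>
              \<exists>a. st (S a) q0 \<noteq> None \<and> a + ptime G (fst q0) \<le> Suc T"
    and remote_pred: "\<And>q0. succ G q0 (j, n) \<Longrightarrow> place G (fst q0) \<noteq> place G j \<Longrightarrow>
              \<exists>c. fin (S c) (q0, (j, n)) \<noteq> None \<and> c \<le> T"
  shows "st (S (Suc T)) (j, n) \<noteq> None"
proof (cases "st (S T) (j, n)")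
  case None
  have "ready G (S T) (Suc T) (j, n)"
    unfolding ready_def
  proof (intro conjI allI impI)
    show "fst (j, n) \<in> tasks G" "1 \<le> snd (j, n)" "snd (j, n) \<le> niter G"
      using v by (auto simp: valid_inst_def)
    show "st (S T) (j, n) = None" by (rule None)
    show "snd (j, n) = 1 \<or> done_by G (S T) (fst (j, n), snd (j, n) - 1) (Suc T)"
    proof (cases "n = 1")
      case False
      then obtain a where a: "st (S a) (j, n - 1) \<noteq> None" "a + ptime G j \<le> Suc T"
        using prev by blast
      have "j \<in> tasks G" using v by (simp add: valid_inst_def)
      then show ?thesis using done_by_state[of a "(j, n - 1)"] a by simp
    qed simp
  next
    fix q0 assume sq: "succ G q0 (j, n)"
    have q0: "fst q0 \<in> tasks G" using succ_valid[OF sq] by (simp add: valid_inst_def)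
    show "if place G (fst q0) = place G (fst (j, n)) then done_by G (S T) q0 (Suc T)
          else \<exists>s. fin (S T) (q0, j, n) = Some s \<and> s < Suc T"
    proof (cases "place G (fst q0) = place G (fst (j, n))")
      case True
      then obtain a where a: "st (S a) q0 \<noteq> None" "a + ptime G (fst q0) \<le> Suc T"
        using local_pred[OF sq] by auto
      show ?thesis using done_by_state[OF a q0] True by simp
    next
      case False
      obtain c where c: "fin (S c) (q0, (j, n)) \<noteq> None" "c \<le> T" using remote_pred[OF sq] False by auto
      then obtain e where e: "fin (S c) (q0, (j, n)) = Some e" "e \<le> c"
        using fin_state_finished by blast
      then show ?thesis using False c(2) fin_state_mono[OF e(1) c(2)] by simp
    qed
  qed
  then show ?thesis by (simp add: st_oes_step)
qed (simp add: st_oes_step_keep)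


lemma new_flow_active:
  assumes ff: "f \<in> flows G" and s: "st (S s) (fst f) = Some s"
    and sp: "s + ptime G (fst (fst f)) = Suc u"
    and no_prev: "\<And>g. g \<in> act (S u) \<union> pend (S u) \<Longrightarrow> next_flow g \<noteq> f"
  shows "f \<in> oes_active G (Suc u) (S u)"
proof -
  have "s \<le> u" using sp flows_ptime_pos[OF ff] by simp
  then have "f \<in> oes_new_flows G (Suc u) (S u)"
    using ff sp st_state_mono[OF s] by (auto simp: oes_new_flows_def)
  moreover have "f \<notin> oes_new_pending G (Suc u) (S u)" using no_prev by (auto simp: oes_new_pending_def)
  ultimately show ?thesis by (simp add: oes_active_def)
qed

lemma first_iter_flow_active:
  assumes ff: "f \<in> flows G" and n1: "snd (fst f) = 1" and s: "st (S s) (fst f) = Some s"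
    and sp: "s + ptime G (fst (fst f)) = Suc u"
  shows "f \<in> oes_active G (Suc u) (S u)"
proof (rule new_flow_active[OF ff s sp])
  fix g assume "g \<in> act (S u) \<union> pend (S u)"
  then have "1 \<le> snd (fst g)"
    using inv_queued[OF oes_inv_state] flows_valid by (simp add: valid_inst_def)
  then show "next_flow g \<noteq> f" using n1 by (auto simp: next_flow_def)
qed

lemma flow_active_after_prev_finished:
  assumes ff: "f \<in> flows G" and s: "st (S s) (fst f) = Some s"
    and sp: "s + ptime G (fst (fst f)) = Suc u"
    and e: "fin (S e) (prev_flow f) = Some e" and el: "e < Suc u"
  shows "f \<in> oes_active G (Suc u) (S u)"
proof (rule new_flow_active[OF ff s sp])
  fix g assume g: "g \<in> act (S u) \<union> pend (S u)"
  show "next_flow g \<noteq> f"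
  proof
    assume "next_flow g = f"
    then have "g = prev_flow f" by auto
    moreover have "fin (S u) (prev_flow f) = Some e" using fin_state_mono[OF e] el by simp
    ultimately show False using inv_queued[OF oes_inv_state g] by simp
  qed
qed

lemma flow_pending_at_prev_finish:
  assumes ff: "f \<in> flows G" and n2: "2 \<le> snd (fst f)" and s: "st (S s) (fst f) = Some s"
    and e: "fin (S (Suc e')) (prev_flow f) = Some (Suc e')" and le: "s + ptime G (fst (fst f)) \<le> Suc e'"
  shows "f \<in> pend (S (Suc e'))"
proof -
  have pf: "prev_flow f \<in> flows G" "next_flow (prev_flow f) = f" using prev_flow_flows[OF ff n2] by auto
  have gn: "fin (S e') (prev_flow f) = None"
  proof (rule ccontr)
    assume "fin (S e') (prev_flow f) \<noteq> None"
    then obtain e'' where "fin (S e') (prev_flow f) = Some e''" "e'' \<le> e'"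
      using fin_state_finished by blast
    then show False using fin_state_mono[of e' _ e'' "Suc e'"] e by simp
  qed
  have "f \<notin> oes_promoted G (Suc e') (S e')"
    using gn pf(2) by (auto simp: oes_promoted_def)
  moreover have "f \<in> pend (S e') \<union> oes_new_pending G (Suc e') (S e')"
  proof (cases "s + ptime G (fst (fst f)) = Suc e'")
    case True
    have "s \<le> e'" using True flows_ptime_pos[OF ff] by simp
    then have s': "st (S e') (fst f) = Some s" using st_state_mono[OF s] by simp
    then have nf: "f \<in> oes_new_flows G (Suc e') (S e')" using ff True by (auto simp: oes_new_flows_def)
    obtain s'' where s'': "st (S e') (fst (fst f), snd (fst f) - 1) = Some s''"
        "s'' + ptime G (fst (fst f)) \<le> s"
      using inv_prev_iter[OF oes_inv_state, of e' "fst (fst f)" "snd (fst f)" s] s' n2 by (cases "fst f") auto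
    have "prev_flow f \<in> act (S e') \<union> pend (S e')"
      by (rule inv_ready_queued[OF oes_inv_state pf(1), of _ s''])
        (use s'' \<open>s \<le> e'\<close> gn in \<open>auto simp: fst_prev_flow\<close>)
    then show ?thesis using nf pf(2) unfolding oes_new_pending_def by blast
  next
    case False
    with le have lt: "s + ptime G (fst (fst f)) \<le> e'" by simp
    have i7: "fin (S e') (prev_flow f) \<noteq> None" if "f \<in> act (S e') \<or> fin (S e') f \<noteq> None"
      by (rule inv_earlier_finished[OF oes_inv_state ff pf(1)]) (use that n2 in \<open>auto simp: fst_prev_flow\<close>)
    have "st (S e') (fst f) = Some s" using st_state_mono[OF s] lt by simp
    then have "f \<in> act (S e') \<union> pend (S e')"
      using inv_ready_queued[OF oes_inv_state ff _ lt] i7 gn by blast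
    then show ?thesis using i7 gn by blast
  qed
  ultimately show ?thesis by (simp add: oes_pending_def pend_oes_step)
qed

lemma flow_active_at_prev_finish:
  assumes ff: "f \<in> flows G" and n2: "2 \<le> snd (fst f)" and s: "st (S s) (fst f) = Some s"
    and e: "fin (S e) (prev_flow f) = Some e" and le: "s + ptime G (fst (fst f)) \<le> e"
  shows "f \<in> oes_active G (Suc e) (S e)"
proof -
  obtain e' where e': "e = Suc e'" using fin_state_origin[OF e] by (cases e) auto
  have "f \<in> pend (S e)" using flow_pending_at_prev_finish[OF ff n2 s] e le e' by simp
  moreover have "next_flow (prev_flow f) = f" using prev_flow_flows[OF ff n2] by simp
  moreover have "fin (S e) (prev_flow f) = Some (Suc e - 1)" using e by simp
  ultimately have "f \<in> oes_promoted G (Suc e) (S e)" unfolding oes_promoted_def by blast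
  then show ?thesis by (simp add: oes_active_def)
qed


lemma active_flow_progress_step:
  assumes inv: "oes_inv t \<sigma>" and f: "f \<in> oes_active G (Suc t) \<sigma>"
    and fn: "fin (oes_step G (Suc t) \<sigma>) f = None"
  shows "sent \<sigma> f + guaranteed_rate f \<le> sent (oes_step G (Suc t) \<sigma>) f \<and> f \<in> act (oes_step G (Suc t) \<sigma>)"
proof -
  have nd: "f \<notin> oes_completed G (Suc t) \<sigma>" using fn by (auto simp: fin_oes_step split: if_splits)
  then have "sent \<sigma> f + oes_amount G (Suc t) \<sigma> f < vol G f" using f by (simp add: oes_completed_def)
  then have "oes_amount G (Suc t) \<sigma> f = oes_rate G (Suc t) \<sigma> f" using f by (simp add: oes_amount_def)
  then show ?thesis
    using nd f guaranteed_rate_le_oes_rate[OF inv f] by (simp add: sent_oes_step act_oes_step)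
qed

lemma active_flow_progress:
  assumes f: "f \<in> oes_active G (Suc u) (S u)" and fn: "fin (S (Suc u + K)) f = None"
  shows "real (Suc K) * guaranteed_rate f \<le> sent (S (Suc u + K)) f \<and> f \<in> act (S (Suc u + K))"
  using fn
proof (induction K)
  case 0
  have "f \<in> flows G" "fin (S u) f = None" using oes_active_flow[OF oes_inv_state f] by auto
  then have "0 \<le> sent (S u) f" using inv_sent[OF oes_inv_state] by blast
  with active_flow_progress_step[OF oes_inv_state f] 0 show ?case by simp
next
  case (Suc K)
  then have ih: "real (Suc K) * guaranteed_rate f \<le> sent (S (Suc u + K)) f" "f \<in> act (S (Suc u + K))"
    using fin_state_None_mono[of "Suc (Suc u + K)" f "Suc u + K"] by auto
  have "f \<in> oes_active G (Suc (Suc u + K)) (S (Suc u + K))" using ih(2) by (simp add: oes_active_def)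
  from active_flow_progress_step[OF oes_inv_state this] Suc.prems ih show ?case
    by (simp add: algebra_simps)
qed

lemma active_flow_finishes:
  assumes f: "f \<in> oes_active G (Suc u) (S u)" and v: "vol G f \<le> real (Suc K) * guaranteed_rate f"
  shows "fin (S (Suc u + K)) f \<noteq> None"
proof
  assume fn: "fin (S (Suc u + K)) f = None"
  have "f \<in> flows G" using oes_active_flow[OF oes_inv_state f] by simp
  then have "sent (S (Suc u + K)) f < vol G f" using inv_sent[OF oes_inv_state _ fn] by blast
  then show False using active_flow_progress[OF f fn] v by linarith
qed

lemma flow_active_before:
  assumes ff: "f \<in> flows G" and a: "st (S a) (fst f) \<noteq> None" and ab: "a + ptime G (fst (fst f)) \<le> b"
    and prev: "snd (fst f) = 1 \<or> (fin (S c) (prev_flow f) \<noteq> None \<and> c < b)"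
  shows "\<exists>w<b. f \<in> oes_active G (Suc w) (S w)"
proof -
  obtain s where s: "st (S a) (fst f) = Some s" "s \<le> a" "st (S s) (fst f) = Some s"
    using st_state_started[OF a] by blast
  obtain u where u: "s + ptime G (fst (fst f)) = Suc u"
    using flows_ptime_pos[OF ff] by (intro that[of "s + ptime G (fst (fst f)) - 1"]) simp
  have ub: "u < b" using u s ab by simp
  show ?thesis
  proof (cases "snd (fst f) = 1")
    case True
    then show ?thesis using first_iter_flow_active[OF ff True s(3) u] ub by blast
  next
    case False
    with prev have c: "fin (S c) (prev_flow f) \<noteq> None" "c < b" by auto
    have n2: "2 \<le> snd (fst f)" using False flows_valid[OF ff] by (simp add: valid_inst_def)
    obtain e where e: "fin (S c) (prev_flow f) = Some e" "e \<le> c" "fin (S e) (prev_flow f) = Some e"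
      using fin_state_finished[OF c(1)] by blast
    show ?thesis
    proof (cases "e < Suc u")
      case True
      then show ?thesis using flow_active_after_prev_finished[OF ff s(3) u e(3)] ub by blast
    next
      case False
      then have "f \<in> oes_active G (Suc e) (S e)"
        using flow_active_at_prev_finish[OF ff n2 s(3) e(3)] u by simp
      then show ?thesis using e(2) c(2) by (intro exI[of _ e]) simp
    qed
  qed
qed

lemma flow_finishes_by:
  assumes ff: "f \<in> flows G" and a: "st (S a) (fst f) \<noteq> None" and ab: "a + ptime G (fst (fst f)) \<le> b"
    and prev: "snd (fst f) = 1 \<or> (fin (S c) (prev_flow f) \<noteq> None \<and> c < b)"
    and v: "vol G f \<le> real (Suc K) * guaranteed_rate f"
  shows "fin (S (b + K)) f \<noteq> None"
proof
  obtain w where w: "w < b" "f \<in> oes_active G (Suc w) (S w)"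
    using flow_active_before[OF ff a ab prev] by blast
  assume none: "fin (S (b + K)) f = None"
  have "fin (S (Suc w + K)) f = None" by (rule fin_state_None_mono[OF none]) (use w(1) in simp)
  then show False using active_flow_finishes[OF w(2) v] by simp
qed

lemma oes_start_unique: "oes_start G q s1 \<Longrightarrow> oes_start G q s2 \<Longrightarrow> s1 = s2"
  unfolding oes_start_def by (metis nat_le_linear option.inject st_state_mono)

lemma the_oes_start:
  assumes "st (S a) q \<noteq> None"
  shows "oes_start G q (THE s. oes_start G q s) \<and> (THE s. oes_start G q s) \<le> a"
proof -
  obtain s where s: "s \<le> a" "oes_start G q s"
    using st_state_started[OF assms] unfolding oes_start_def by blast
  then have "(THE s. oes_start G q s) = s" using oes_start_unique by blast
  then show ?thesis using s by simp
qed

end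

section \<open>Bounds on start and finish times\<close>

text \<open>U q bounds the start time of task instance q and W f strictly bounds the finish time of
  flow f. The conditions ask that the bounds respect all dependencies and that each flow f can be
  active from step b on for K + 1 steps, enough at the guaranteed rate, before W f.\<close>
locale oes_bounds = wf_gnn_job G for G :: "'t gnn_job" +
  fixes U :: "'t inst \<Rightarrow> nat" and W :: "'t flow \<Rightarrow> nat"
  assumes start_bound_pos: "valid_inst G q \<Longrightarrow> 1 \<le> U q"
    and start_bound_prev_iter: "valid_inst G (j, n) \<Longrightarrow> 2 \<le> n \<Longrightarrow> U (j, n - 1) + ptime G j \<le> U (j, n)"
    and start_bound_same_machine: "succ G q0 q \<Longrightarrow> place G (fst q0) = place G (fst q) \<Longrightarrow>
      U q0 + ptime G (fst q0) \<le> U q"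
    and finish_bound_le_start_bound: "f \<in> flows G \<Longrightarrow> W f \<le> U (snd f)"
    and finish_bound: "f \<in> flows G \<Longrightarrow> \<exists>b K. U (fst f) + ptime G (fst (fst f)) \<le> b \<and>
      (2 \<le> snd (fst f) \<longrightarrow> W (prev_flow f) \<le> b) \<and>
      vol G f \<le> real (Suc K) * guaranteed_rate f \<and> b + K < W f"
begin

lemma start_by_bound_of_preds:
  assumes vq: "valid_inst G q"
    and starts: "\<And>q0. valid_inst G q0 \<Longrightarrow> rank G q0 < rank G q \<Longrightarrow> st (S (U q0)) q0 \<noteq> None"
    and finishes: "\<And>f. f \<in> flows G \<Longrightarrow> rank G (fst f) < rank G q \<Longrightarrow> fin (S (W f - 1)) f \<noteq> None"
  shows "st (S (U q)) q \<noteq> None"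
proof -
  obtain j n where q: "q = (j, n)" by (cases q)
  obtain T where T: "U q = Suc T" using start_bound_pos[OF vq] by (intro that[of "U q - 1"]) simp
  have "st (S (Suc T)) (j, n) \<noteq> None"
  proof (rule start_when_dependencies_met)
    show "valid_inst G (j, n)" using vq q by simp
    show "n = 1 \<or> (\<exists>a. st (S a) (j, n - 1) \<noteq> None \<and> a + ptime G j \<le> Suc T)"
    proof (cases "n = 1")
      case False
      then have n2: "2 \<le> n" using vq q by (simp add: valid_inst_def)
      have "valid_inst G (j, n - 1)" using vq q n2 by (auto simp: valid_inst_def)
      moreover have "rank G (j, n - 1) < rank G q" using rank_prev_iter[OF n2, of G j] q by simp
      moreover have "U (j, n - 1) + ptime G j \<le> Suc T" using start_bound_prev_iter[of j n] vq q n2 T by simp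
      ultimately show ?thesis using starts by blast
    qed simp
  next
    fix q0 assume sq: "succ G q0 (j, n)" and "place G (fst q0) = place G j"
    then have "U q0 + ptime G (fst q0) \<le> Suc T" using start_bound_same_machine[OF sq] T q by simp
    moreover have "st (S (U q0)) q0 \<noteq> None" using starts succ_valid[OF sq] rank_succ[OF sq] q by simp
    ultimately show "\<exists>a. st (S a) q0 \<noteq> None \<and> a + ptime G (fst q0) \<le> Suc T" by blast
  next
    fix q0 assume sq: "succ G q0 (j, n)" and "place G (fst q0) \<noteq> place G j"
    then have ff: "(q0, (j, n)) \<in> flows G" by (simp add: flows_def)
    have "fin (S (W (q0, (j, n)) - 1)) (q0, (j, n)) \<noteq> None"
      using finishes[OF ff] rank_succ[OF sq] q by simp
    moreover have "W (q0, (j, n)) - 1 \<le> T" using finish_bound_le_start_bound[OF ff] T q by simp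
    ultimately show "\<exists>c. fin (S c) (q0, j, n) \<noteq> None \<and> c \<le> T" by blast
  qed
  then show ?thesis using T q by simp
qed

lemma finish_by_bound_of_preds:
  assumes ff: "f \<in> flows G" and started: "st (S (U (fst f))) (fst f) \<noteq> None"
    and finishes: "\<And>g. g \<in> flows G \<Longrightarrow> rank G (fst g) < rank G (fst f) \<Longrightarrow> fin (S (W g - 1)) g \<noteq> None"
  shows "fin (S (W f - 1)) f \<noteq> None"
proof -
  obtain b K where bK: "U (fst f) + ptime G (fst (fst f)) \<le> b"
      "2 \<le> snd (fst f) \<longrightarrow> W (prev_flow f) \<le> b" "vol G f \<le> real (Suc K) * guaranteed_rate f" "b + K < W f"
    using finish_bound[OF ff] by blast
  have "snd (fst f) = 1 \<or> (fin (S (W (prev_flow f) - 1)) (prev_flow f) \<noteq> None \<and> W (prev_flow f) - 1 < b)"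
  proof (cases "snd (fst f) = 1")
    case False
    then have n2: "2 \<le> snd (fst f)" using flows_valid[OF ff] by (simp add: valid_inst_def)
    have "rank G (fst (prev_flow f)) < rank G (fst f)"
      using rank_prev_iter[OF n2, of G "fst (fst f)"] by (cases "fst f") (simp add: fst_prev_flow)
    then have "fin (S (W (prev_flow f) - 1)) (prev_flow f) \<noteq> None"
      using finishes prev_flow_flows[OF ff n2] by blast
    moreover have "W (prev_flow f) - 1 < b" using bK(1,2) n2 flows_ptime_pos[OF ff] by simp
    ultimately show ?thesis by blast
  qed simp
  then have finished: "fin (S (b + K)) f \<noteq> None" by (rule flow_finishes_by[OF ff started bK(1) _ bK(3)])
  have le: "b + K \<le> W f - 1" using bK(4) by simp
  show ?thesis
  proof
    assume "fin (S (W f - 1)) f = None"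
    from fin_state_None_mono[OF this le] show False using finished by simp
  qed
qed

lemma bounds_hold_up_to_rank:
  "(\<forall>q. valid_inst G q \<and> rank G q = r \<longrightarrow> st (S (U q)) q \<noteq> None) \<and>
   (\<forall>f\<in>flows G. rank G (fst f) = r \<longrightarrow> fin (S (W f - 1)) f \<noteq> None)"
proof (induction r rule: less_induct)
  case (less r)
  have start: "st (S (U q)) q \<noteq> None" if "valid_inst G q" "rank G q = r" for q
    using start_by_bound_of_preds[OF that(1)] less that(2) by blast
  moreover have "fin (S (W f - 1)) f \<noteq> None" if "f \<in> flows G" "rank G (fst f) = r" for f
    using finish_by_bound_of_preds[OF that(1) start] flows_valid[OF that(1)] less that(2) by blast
  ultimately show ?case by blast
qed

lemma start_by_bound: "valid_inst G q \<Longrightarrow> st (S (U q)) q \<noteq> None"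
  using bounds_hold_up_to_rank by blast

lemma oes_terminates: "oes_terminates G"
  unfolding oes_terminates_def
  using start_by_bound the_oes_start niter_pos by (fastforce simp: valid_inst_def)

lemma oes_makespan_le:
  assumes "tasks G \<noteq> {}" and "\<And>j. j \<in> tasks G \<Longrightarrow> U (j, niter G) + ptime G j \<le> M"
  shows "oes_makespan G \<le> M"
  unfolding oes_makespan_def
proof (rule Max.boundedI)
  fix y assume "y \<in> (\<lambda>j. (THE s. oes_start G (j, niter G) s) + ptime G j) ` tasks G"
  then obtain j where j: "j \<in> tasks G" and y: "y = (THE s. oes_start G (j, niter G) s) + ptime G j"
    by blast
  have "valid_inst G (j, niter G)" using j niter_pos by (simp add: valid_inst_def)
  then have "(THE s. oes_start G (j, niter G) s) \<le> U (j, niter G)"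
    using start_by_bound the_oes_start by blast
  then show "y \<le> M" using assms(2)[OF j] y by simp
qed (use assms(1) finite_tasks in auto)

end


section \<open>Termination\<close>

context wf_gnn_job
begin

text \<open>Bounds spacing consecutive ranks 2C apart; they give termination without reference to any
  offline schedule.\<close>
lemma rank_bounds:
  assumes ptime_le: "\<And>j. j \<in> tasks G \<Longrightarrow> ptime G j \<le> C"
    and flow_le: "\<And>f. f \<in> flows G \<Longrightarrow> ptime G (fst (fst f)) + nat \<lceil>vol G f / guaranteed_rate f\<rceil> < C"
  shows "oes_bounds G (\<lambda>q. 2 * C * rank G q + C) (\<lambda>f. 2 * C * rank G (fst f) + 2 * C)"
proof (unfold_locales)
  fix q assume "valid_inst G q"
  then show "1 \<le> 2 * C * rank G q + C"
    using ptime_le ptime_pos by (fastforce simp: valid_inst_def)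
next
  fix j n assume "valid_inst G (j, n)" "2 \<le> n"
  then show "2 * C * rank G (j, n - 1) + C + ptime G j \<le> 2 * C * rank G (j, n) + C"
    using ptime_le mult_add_le_mult_of_less[where c = "2 * C", of "rank G (j, n - 1)" "rank G (j, n)"] rank_prev_iter[of n G j]
    by (fastforce simp: valid_inst_def)
next
  fix q0 q assume sq: "succ G q0 q"
  then show "2 * C * rank G q0 + C + ptime G (fst q0) \<le> 2 * C * rank G q + C"
    using ptime_le[of "fst q0"] mult_add_le_mult_of_less[where c = "2 * C", OF rank_succ[OF sq]] succ_valid[OF sq]
    by (simp add: valid_inst_def)
next
  fix f assume "f \<in> flows G"
  then show "2 * C * rank G (fst f) + 2 * C \<le> 2 * C * rank G (snd f) + C"
    using mult_add_le_mult_of_less[where c = "2 * C", OF rank_succ] by (fastforce simp: flows_def)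
next
  fix f assume ff: "f \<in> flows G"
  let ?K = "nat \<lceil>vol G f / guaranteed_rate f\<rceil>"
  show "\<exists>b K. 2 * C * rank G (fst f) + C + ptime G (fst (fst f)) \<le> b \<and>
      (2 \<le> snd (fst f) \<longrightarrow> 2 * C * rank G (fst (prev_flow f)) + 2 * C \<le> b) \<and>
      vol G f \<le> real (Suc K) * guaranteed_rate f \<and> b + K < 2 * C * rank G (fst f) + 2 * C"
  proof (intro exI conjI impI)
    assume "2 \<le> snd (fst f)"
    then show "2 * C * rank G (fst (prev_flow f)) + 2 * C \<le> 2 * C * rank G (fst f) + C + ptime G (fst (fst f))"
      using mult_add_le_mult_of_less[where c = "2 * C", of "rank G (fst (prev_flow f))" "rank G (fst f)"]
        rank_prev_iter[of "snd (fst f)" G "fst (fst f)"]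
      by (simp add: fst_prev_flow)
  next
    show "vol G f \<le> real (Suc ?K) * guaranteed_rate f"
      using guaranteed_rate_pos[OF ff] by (rule le_Suc_ceiling_div_mult)
  qed (use flow_le[OF ff] in simp_all)
qed

theorem oes_always_terminates: "oes_terminates G"
proof -
  let ?K = "\<lambda>f. ptime G (fst (fst f)) + nat \<lceil>vol G f / guaranteed_rate f\<rceil>"
  obtain C1 where C1: "\<forall>c\<in>ptime G ` tasks G. c < C1"
    using finite_nat_set_iff_bounded finite_imageI[OF finite_tasks] by blast
  obtain C2 where C2: "\<forall>c\<in>?K ` flows G. c < C2"
    using finite_nat_set_iff_bounded finite_imageI[OF finite_flows] by blast
  have "ptime G j \<le> C1 + C2" if "j \<in> tasks G" for j
    using C1 that by fastforce
  moreover have "?K f < C1 + C2" if "f \<in> flows G" for f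
    using C2 that by fastforce
  ultimately interpret oes_bounds G "\<lambda>q. 2 * (C1 + C2) * rank G q + (C1 + C2)"
      "\<lambda>f. 2 * (C1 + C2) * rank G (fst f) + 2 * (C1 + C2)"
    by (rule rank_bounds)
  show ?thesis by (rule oes_terminates)
qed

end

section \<open>Comparison with a feasible offline schedule\<close>

locale feasible_schedule = wf_gnn_job G for G :: "'t gnn_job" +
  fixes x :: "'t inst \<Rightarrow> nat" and k :: "'t flow \<Rightarrow> nat \<Rightarrow> real"
  assumes feasible: "feasible G x k"
begin

lemma feasible_start_pos:
  assumes "valid_inst G q"
  shows "1 \<le> x q"
proof -
  have "\<forall>j\<in>tasks G. \<forall>n\<in>{1..niter G}. 1 \<le> x (j, n)"
    using feasible unfolding feasible_def by (elim conjE) assumption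
  then show ?thesis using assms by (cases q) (simp add: valid_inst_def)
qed

lemma feasible_flow:
  assumes "f \<in> flows G"
  shows "\<forall>t. 0 \<le> k f t"
    and "\<forall>t. k f t \<noteq> 0 \<longrightarrow> x (fst f) + ptime G (fst (fst f)) \<le> t \<and> t < x (snd f)"
    and "(\<Sum>t\<in>{x (fst f) + ptime G (fst (fst f)) ..< x (snd f)}. k f t) = vol G f"
proof -
  have "\<forall>f\<in>flows G. (\<forall>t. 0 \<le> k f t)
      \<and> (\<forall>t. k f t \<noteq> 0 \<longrightarrow> x (fst f) + ptime G (fst (fst f)) \<le> t \<and> t < x (snd f))
      \<and> (\<Sum>t\<in>{x (fst f) + ptime G (fst (fst f)) ..< x (snd f)}. k f t) = vol G f"
    using feasible unfolding feasible_def by (elim conjE) assumption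
  then show "\<forall>t. 0 \<le> k f t"
    and "\<forall>t. k f t \<noteq> 0 \<longrightarrow> x (fst f) + ptime G (fst (fst f)) \<le> t \<and> t < x (snd f)"
    and "(\<Sum>t\<in>{x (fst f) + ptime G (fst (fst f)) ..< x (snd f)}. k f t) = vol G f"
    using assms by blast+
qed

lemma feasible_same_machine:
  assumes "succ G q q'" and "place G (fst q) = place G (fst q')"
  shows "x q + ptime G (fst q) \<le> x q'"
proof -
  have "\<forall>q q'. succ G q q' \<and> place G (fst q) = place G (fst q') \<longrightarrow> x q + ptime G (fst q) \<le> x q'"
    using feasible unfolding feasible_def by (elim conjE) assumption
  then show ?thesis using assms by blast
qed

lemma feasible_prev_iter:
  assumes v: "valid_inst G (j, n)" and n2: "2 \<le> n"
  shows "x (j, n - 1) + ptime G j \<le> x (j, n)"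
proof -
  have "\<forall>j\<in>tasks G. \<forall>n. 1 \<le> n \<and> n < niter G \<longrightarrow> x (j, n) + ptime G j \<le> x (j, Suc n)"
    using feasible unfolding feasible_def by (elim conjE) assumption
  moreover have "j \<in> tasks G" "1 \<le> n - 1" "n - 1 < niter G" using v n2 by (auto simp: valid_inst_def)
  ultimately have "x (j, n - 1) + ptime G j \<le> x (j, Suc (n - 1))" by blast
  then show ?thesis using n2 by simp
qed

lemma feasible_flow_order:
  assumes "f \<in> flows G" "next_flow f \<in> flows G" "k f t \<noteq> 0" "k (next_flow f) t' \<noteq> 0"
  shows "t < t'"
proof -
  have "\<forall>f\<in>flows G. next_flow f \<in> flows G \<longrightarrow>
      (\<forall>t t'. k f t \<noteq> 0 \<and> k (next_flow f) t' \<noteq> 0 \<longrightarrow> t < t')"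
    using feasible unfolding feasible_def by (elim conjE) assumption
  then show ?thesis using assms by blast
qed

lemma feasible_bandwidth:
  "(\<Sum>f\<in>{f\<in>flows G. src_mach G f = m}. k f t) \<le> Bout G m"
  "(\<Sum>f\<in>{f\<in>flows G. dst_mach G f = m}. k f t) \<le> Bin G m"
proof -
  have "\<forall>m t. (\<Sum>f\<in>{f\<in>flows G. src_mach G f = m}. k f t) \<le> Bout G m"
    using feasible unfolding feasible_def by (elim conjE) assumption
  then show "(\<Sum>f\<in>{f\<in>flows G. src_mach G f = m}. k f t) \<le> Bout G m" by blast
  have "\<forall>m t. (\<Sum>f\<in>{f\<in>flows G. dst_mach G f = m}. k f t) \<le> Bin G m"
    using feasible unfolding feasible_def by (elim conjE) assumption
  then show "(\<Sum>f\<in>{f\<in>flows G. dst_mach G f = m}. k f t) \<le> Bin G m" by blast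
qed

lemma feasible_tx_le_bandwidth:
  assumes ff: "f \<in> flows G"
  shows "k f t \<le> min (Bin G (dst_mach G f)) (Bout G (src_mach G f))"
proof -
  have nonneg: "0 \<le> k f' t" if "f' \<in> flows G" for f'
    using feasible_flow(1)[OF that] by blast
  have "k f t \<le> (\<Sum>f'\<in>{f'\<in>flows G. src_mach G f' = src_mach G f}. k f' t)"
    by (rule member_le_sum) (use ff nonneg finite_flows in auto)
  also have "\<dots> \<le> Bout G (src_mach G f)" by (rule feasible_bandwidth(1))
  finally have "k f t \<le> Bout G (src_mach G f)" .
  moreover have "k f t \<le> (\<Sum>f'\<in>{f'\<in>flows G. dst_mach G f' = dst_mach G f}. k f' t)"
    by (rule member_le_sum) (use ff nonneg finite_flows in auto)
  moreover have "\<dots> \<le> Bin G (dst_mach G f)" by (rule feasible_bandwidth(2))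
  ultimately show ?thesis by simp
qed

definition tx_times :: "'t flow \<Rightarrow> nat set" where
  "tx_times f = {t. k f t \<noteq> 0}"

definition first_tx :: "'t flow \<Rightarrow> nat" where
  "first_tx f = Min (tx_times f)"

definition last_tx :: "'t flow \<Rightarrow> nat" where
  "last_tx f = Max (tx_times f)"

lemma tx_times_window:
  "f \<in> flows G \<Longrightarrow> tx_times f \<subseteq> {x (fst f) + ptime G (fst (fst f)) ..< x (snd f)}"
  using feasible_flow(2)[of f] by (auto simp: tx_times_def)

lemma tx_times_nonempty:
  assumes ff: "f \<in> flows G"
  shows "tx_times f \<noteq> {}"
proof
  assume "tx_times f = {}"
  then have "\<forall>t. k f t = 0" by (simp add: tx_times_def)
  then show False using feasible_flow(3)[OF ff] vol_pos[OF ff] by simp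
qed

lemma first_last_tx:
  assumes ff: "f \<in> flows G"
  shows "first_tx f \<in> tx_times f" "last_tx f \<in> tx_times f"
    and "t \<in> tx_times f \<Longrightarrow> first_tx f \<le> t \<and> t \<le> last_tx f"
proof -
  have fin: "finite (tx_times f)" using finite_subset[OF tx_times_window[OF ff]] by simp
  show "first_tx f \<in> tx_times f" unfolding first_tx_def using fin tx_times_nonempty[OF ff] by (rule Min_in)
  show "last_tx f \<in> tx_times f" unfolding last_tx_def using fin tx_times_nonempty[OF ff] by (rule Max_in)
  show "first_tx f \<le> t \<and> t \<le> last_tx f" if "t \<in> tx_times f"
    unfolding first_tx_def last_tx_def using Min_le[OF fin that] Max_ge[OF fin that] by simp
qed

lemma first_tx_last_tx_window:
  assumes ff: "f \<in> flows G"
  shows "x (fst f) + ptime G (fst (fst f)) \<le> first_tx f" "first_tx f \<le> last_tx f" "last_tx f < x (snd f)"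
proof -
  have "first_tx f \<in> {x (fst f) + ptime G (fst (fst f)) ..< x (snd f)}"
    "last_tx f \<in> {x (fst f) + ptime G (fst (fst f)) ..< x (snd f)}"
    using tx_times_window[OF ff] first_last_tx(1,2)[OF ff] by blast+
  then show "x (fst f) + ptime G (fst (fst f)) \<le> first_tx f" "last_tx f < x (snd f)" by simp_all
  show "first_tx f \<le> last_tx f" using first_last_tx[OF ff] by blast
qed

lemma last_tx_prev_flow_lt_first_tx:
  assumes ff: "f \<in> flows G" and n2: "2 \<le> snd (fst f)"
  shows "last_tx (prev_flow f) < first_tx f"
proof -
  have pf: "prev_flow f \<in> flows G" "next_flow (prev_flow f) = f" using prev_flow_flows[OF ff n2] by auto
  have "k (prev_flow f) (last_tx (prev_flow f)) \<noteq> 0" "k f (first_tx f) \<noteq> 0"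
    using first_last_tx(2)[OF pf(1)] first_last_tx(1)[OF ff] by (simp_all add: tx_times_def)
  then show ?thesis using feasible_flow_order[OF pf(1)] pf(2) ff by simp
qed

lemma vol_le_tx_span:
  assumes ff: "f \<in> flows G"
  shows "vol G f \<le> real (last_tx f - first_tx f + 1) * min (Bin G (dst_mach G f)) (Bout G (src_mach G f))"
proof -
  let ?B = "min (Bin G (dst_mach G f)) (Bout G (src_mach G f))"
  let ?window = "{x (fst f) + ptime G (fst (fst f)) ..< x (snd f)}"
  have span: "{first_tx f..last_tx f} \<subseteq> ?window"
    using first_tx_last_tx_window[OF ff] by auto
  have outside: "k f t = 0" if "t \<in> ?window - {first_tx f..last_tx f}" for t
  proof (rule ccontr)
    assume "k f t \<noteq> 0"
    then have "t \<in> tx_times f" by (simp add: tx_times_def)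
    then show False using first_last_tx(3)[OF ff] that by auto
  qed
  have "vol G f = (\<Sum>t\<in>?window. k f t)"
    using feasible_flow(3)[OF ff] by simp
  also have "\<dots> = (\<Sum>t\<in>{first_tx f..last_tx f}. k f t)"
    using outside by (intro sum.mono_neutral_right[OF _ span]) auto
  also have "\<dots> \<le> (\<Sum>t\<in>{first_tx f..last_tx f}. ?B)"
    by (rule sum_mono) (rule feasible_tx_le_bandwidth[OF ff])
  also have "\<dots> = real (last_tx f - first_tx f + 1) * ?B"
    using first_tx_last_tx_window(2)[OF ff] by (simp add: Suc_diff_le)
  finally show ?thesis .
qed

lemma vol_le_scaled_tx_span:
  assumes D: "1 \<le> Delta G" and ff: "f \<in> flows G"
  shows "vol G f \<le> real (Delta G * (last_tx f - first_tx f + 1)) * guaranteed_rate f"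
proof -
  have "real (Delta G * (last_tx f - first_tx f + 1)) * guaranteed_rate f
      = real (last_tx f - first_tx f + 1) * min (Bin G (dst_mach G f)) (Bout G (src_mach G f))"
    using D by (simp add: guaranteed_rate_def field_simps)
  then show ?thesis using vol_le_tx_span[OF ff] by simp
qed

lemma scaled_schedule_bounds:
  assumes D: "1 \<le> Delta G"
  shows "oes_bounds G (\<lambda>q. Delta G * x q) (\<lambda>f. Delta G * (last_tx f + 1))"
proof (unfold_locales)
  fix q assume "valid_inst G q"
  then show "1 \<le> Delta G * x q" using feasible_start_pos D by (metis mult_le_mono nat_mult_1)
next
  fix j n assume "valid_inst G (j, n)" "2 \<le> n"
  then show "Delta G * x (j, n - 1) + ptime G j \<le> Delta G * x (j, n)"
    by (rule scaled_add_le[OF D feasible_prev_iter])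
next
  fix q0 q assume "succ G q0 q" "place G (fst q0) = place G (fst q)"
  then show "Delta G * x q0 + ptime G (fst q0) \<le> Delta G * x q"
    by (rule scaled_add_le[OF D feasible_same_machine])
next
  fix f assume "f \<in> flows G"
  then have "last_tx f + 1 \<le> x (snd f)" using first_tx_last_tx_window(3) by (simp add: Suc_le_eq)
  then show "Delta G * (last_tx f + 1) \<le> Delta G * x (snd f)" by (rule mult_le_mono2)
next
  fix f assume ff: "f \<in> flows G"
  let ?F = "first_tx f" and ?L = "last_tx f" and ?D = "Delta G"
  have FL: "?F \<le> ?L" using first_tx_last_tx_window(2)[OF ff] .
  show "\<exists>b K. ?D * x (fst f) + ptime G (fst (fst f)) \<le> b \<and>
      (2 \<le> snd (fst f) \<longrightarrow> ?D * (last_tx (prev_flow f) + 1) \<le> b) \<and>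
      vol G f \<le> real (Suc K) * guaranteed_rate f \<and> b + K < ?D * (?L + 1)"
  proof (intro exI conjI impI)
    show "?D * x (fst f) + ptime G (fst (fst f)) \<le> ?D * ?F"
      by (rule scaled_add_le[OF D first_tx_last_tx_window(1)[OF ff]])
  next
    assume "2 \<le> snd (fst f)"
    then have "last_tx (prev_flow f) + 1 \<le> ?F" using last_tx_prev_flow_lt_first_tx[OF ff] by simp
    then show "?D * (last_tx (prev_flow f) + 1) \<le> ?D * ?F" by (rule mult_le_mono2)
  next
    show "vol G f \<le> real (Suc (?D * (?L - ?F + 1) - 1)) * guaranteed_rate f"
      using vol_le_scaled_tx_span[OF D ff] D by simp
  next
    have "?D * ?F + ?D * (?L - ?F + 1) = ?D * (?L + 1)"
      using FL by (simp add: add_mult_distrib2[symmetric])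
    moreover have "1 \<le> ?D * (?L - ?F + 1)" using D by simp
    ultimately show "?D * ?F + (?D * (?L - ?F + 1) - 1) < ?D * (?L + 1)" by linarith
  qed
qed

lemma oes_makespan_le_scaled_makespan:
  assumes flows_ex: "one_iter_flows G \<noteq> {}"
  shows "oes_makespan G \<le> Delta G * makespan G x"
proof -
  have D: "1 \<le> Delta G" by (rule Delta_pos[OF flows_ex])
  interpret oes_bounds G "\<lambda>q. Delta G * x q" "\<lambda>f. Delta G * (last_tx f + 1)"
    by (rule scaled_schedule_bounds[OF D])
  show ?thesis
  proof (rule oes_makespan_le[OF tasks_nonempty[OF flows_ex]])
    fix j assume j: "j \<in> tasks G"
    have "x (j, niter G) + ptime G j \<le> makespan G x"
      unfolding makespan_def by (rule Max_ge) (use j finite_tasks in auto)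
    then show "Delta G * x (j, niter G) + ptime G j \<le> Delta G * makespan G x"
      by (rule scaled_add_le[OF D])
  qed
qed

end

theorem theorem1:
  fixes G :: "'t gnn_job"
  assumes "wf_job G"
    and "one_iter_flows G \<noteq> {}"
  shows "oes_terminates G \<and>
         (\<forall>x k. feasible G x k \<longrightarrow>
            real (oes_makespan G) \<le> real (Delta G) * real (makespan G x))"
proof (intro conjI allI impI)
  interpret wf_gnn_job G by (rule wf_gnn_job.intro) (rule assms(1))
  show "oes_terminates G" by (rule oes_always_terminates)
  fix x k assume "feasible G x k"
  then interpret feasible_schedule G x k by unfold_locales
  have "oes_makespan G \<le> Delta G * makespan G x"
    by (rule oes_makespan_le_scaled_makespan[OF assms(2)])
  then show "real (oes_makespan G) \<le> real (Delta G) * real (makespan G x)"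
    by (metis of_nat_le_iff of_nat_mult)
qed

end
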